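(* Let $F$ be a field, $A$ a free abelian group with basis $\{x_1,\dots,x_n\}$, $F * A$ a twisted group algebra of $A$ over $F$, and $M$ a finitely generated (right) $F * A$-module with $\mathrm{gk}(M)=r$, where $0<r<n$. Let $\{i_1,\dots,i_r\}\subseteq\{1,\dots,n\}$ be such that $M$ is not torsion as an $F * \langle x_{i_1},\dots,x_{i_r}\rangle$-module, let $\{j_1,\dots,j_{n-r}\}$ be the complement of $\{i_1,\dots,i_r\}$ in $\{1,\dots,n\}$, and set $\mathcal S = F * \langle x_{i_1},\dots,x_{i_r}\rangle\setminus\{0\}$. Let $D$ be the quotient division ring of $F * \langle x_{i_1},\dots,x_{i_r}\rangle$, so that the localization $(F * A)\mathcal S^{-1}$ is a crossed product $D * \langle x_{j_1},\dots,x_{j_{n-r}}\rangle$. Then $M\mathcal S^{-1}$ is a nonzero $D * \langle x_{j_1},\dots,x_{j_{n-r}}\rangle$-module which is finite dimensional as a $D$-vector space.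
   Context: A twisted group algebra $F * A$ of a finitely generated free abelian group $A$ over a field $F$ is an associative $F$-algebra with an $F$-basis $\{\bar a : a \in A\}$ such that $\bar a_1 \bar a_2 = \tau(a_1,a_2)\overline{a_1a_2}$ with $\tau: A\times A\to F\setminus\{0\}$ a 2-cocycle. For a subgroup $B\le A$, $F * B$ is the subalgebra spanned by $\{\bar b: b\in B\}$; $F * B\setminus\{0\}$ is an Ore subset of $F * A$. A module $M$ is torsion as an $F * B$-module if every element of $M$ is annihilated by some nonzero element of $F * B$. A crossed product $D * C$ of an abelian group $C$ over a division ring $D$ is a ring with a $D$-basis $\{\bar c: c\in C\}$ with $\bar c_1\bar c_2=\tau(c_1,c_2)\overline{c_1c_2}$ ($\tau(c_1,c_2)\in D\setminus\{0\}$) and $\bar c d=\sigma_c(d)\bar c$ for automorphisms $\sigma_c$ of $D$. $\mathrm{gk}(M)$ denotes the Gelfand–Kirillov dimension of $M$ (measured over $F$); for finitely generated modules it equals the supremum of the ranks of subgroups $B\le A$ such that $M$ is not $F * B$-torsion. $M\mathcal S^{-1}$ denotes the localized module $M\otimes_{F * A}(F * A)\mathcal S^{-1}$. *)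

theory Defs
  imports Complex_Main "HOL-Library.Extended_Real" "HOL-Library.Liminf_Limsup"
begin

text \<open>The free abelian group A with basis x_i (i in the finite index type 'i) is
  realised as 'i => int; x_i is the indicator of i. Group operation is pointwise addition.\<close>

definition gzero :: "'i \<Rightarrow> int" where "gzero = (\<lambda>i. 0)"
definition gadd :: "('i \<Rightarrow> int) \<Rightarrow> ('i \<Rightarrow> int) \<Rightarrow> ('i \<Rightarrow> int)" where
  "gadd a b = (\<lambda>i. a i + b i)"
definition gdiff :: "('i \<Rightarrow> int) \<Rightarrow> ('i \<Rightarrow> int) \<Rightarrow> ('i \<Rightarrow> int)" where
  "gdiff a b = (\<lambda>i. a i - b i)"

definition subgrp :: "'i set \<Rightarrow> ('i \<Rightarrow> int) set" where
  "subgrp I = {a. \<forall>j. j \<notin> I \<longrightarrow> a j = 0}"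

definition two_cocycle :: "(('i \<Rightarrow> int) \<Rightarrow> ('i \<Rightarrow> int) \<Rightarrow> 'f::field) \<Rightarrow> bool" where
  "two_cocycle \<tau> \<longleftrightarrow> (\<forall>a b. \<tau> a b \<noteq> 0) \<and>
     (\<forall>a b c. \<tau> a b * \<tau> (gadd a b) c = \<tau> b c * \<tau> a (gadd b c))"

text \<open>Elements of F*A: finitely supported coefficient functions; F*B = those supported in B.\<close>
definition tga_carrier :: "('i \<Rightarrow> int) set \<Rightarrow> (('i \<Rightarrow> int) \<Rightarrow> 'f::field) set" where
  "tga_carrier B = {p. finite {a. p a \<noteq> 0} \<and> {a. p a \<noteq> 0} \<subseteq> B}"

definition tga_zero :: "('i \<Rightarrow> int) \<Rightarrow> 'f::field" where "tga_zero = (\<lambda>a. 0)"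

definition tga_add :: "(('i \<Rightarrow> int) \<Rightarrow> 'f::field) \<Rightarrow> (('i \<Rightarrow> int) \<Rightarrow> 'f) \<Rightarrow> (('i \<Rightarrow> int) \<Rightarrow> 'f)" where
  "tga_add p q = (\<lambda>a. p a + q a)"

text \<open>Multiplication: bar a1 * bar a2 = tau(a1,a2) bar(a1 a2), extended F-bilinearly.\<close>
definition tga_mult :: "(('i \<Rightarrow> int) \<Rightarrow> ('i \<Rightarrow> int) \<Rightarrow> 'f::field) \<Rightarrow>
    (('i \<Rightarrow> int) \<Rightarrow> 'f) \<Rightarrow> (('i \<Rightarrow> int) \<Rightarrow> 'f) \<Rightarrow> (('i \<Rightarrow> int) \<Rightarrow> 'f)" where
  "tga_mult \<tau> p q = (\<lambda>c. \<Sum>a\<in>{a. p a \<noteq> 0}. p a * q (gdiff c a) * \<tau> a (gdiff c a))"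

text \<open>Scalar lambda of F inside F*A (lambda times the identity tau(1,1)^-1 bar 1).\<close>
definition tga_scalar :: "(('i \<Rightarrow> int) \<Rightarrow> ('i \<Rightarrow> int) \<Rightarrow> 'f::field) \<Rightarrow> 'f \<Rightarrow> (('i \<Rightarrow> int) \<Rightarrow> 'f)" where
  "tga_scalar \<tau> l = (\<lambda>a. if a = gzero then l / \<tau> gzero gzero else 0)"

definition tga_one :: "(('i \<Rightarrow> int) \<Rightarrow> ('i \<Rightarrow> int) \<Rightarrow> 'f::field) \<Rightarrow> (('i \<Rightarrow> int) \<Rightarrow> 'f)" where
  "tga_one \<tau> = tga_scalar \<tau> 1"

definition tga_prod :: "(('i \<Rightarrow> int) \<Rightarrow> ('i \<Rightarrow> int) \<Rightarrow> 'f::field) \<Rightarrow>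
    (('i \<Rightarrow> int) \<Rightarrow> 'f) list \<Rightarrow> (('i \<Rightarrow> int) \<Rightarrow> 'f)" where
  "tga_prod \<tau> vs = foldr (tga_mult \<tau>) vs (tga_one \<tau>)"

text \<open>Right F*A-module structure on the type 'm (the whole type is M).\<close>
definition right_tga_module :: "(('i \<Rightarrow> int) \<Rightarrow> ('i \<Rightarrow> int) \<Rightarrow> 'f::field) \<Rightarrow>
    ('m::ab_group_add \<Rightarrow> (('i \<Rightarrow> int) \<Rightarrow> 'f) \<Rightarrow> 'm) \<Rightarrow> bool" where
  "right_tga_module \<tau> act \<longleftrightarrow>
     (\<forall>p\<in>tga_carrier UNIV. \<forall>q\<in>tga_carrier UNIV. \<forall>m. act m (tga_add p q) = act m p + act m q) \<and>
     (\<forall>p\<in>tga_carrier UNIV. \<forall>m m'. act (m + m') p = act m p + act m' p) \<and>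
     (\<forall>p\<in>tga_carrier UNIV. \<forall>q\<in>tga_carrier UNIV. \<forall>m. act m (tga_mult \<tau> p q) = act (act m p) q) \<and>
     (\<forall>m. act m (tga_one \<tau>) = m)"

definition fin_gen_module :: "('m::ab_group_add \<Rightarrow> (('i \<Rightarrow> int) \<Rightarrow> 'f::field) \<Rightarrow> 'm) \<Rightarrow> bool" where
  "fin_gen_module act \<longleftrightarrow> (\<exists>G. finite G \<and>
     (\<forall>m. \<exists>c. (\<forall>g\<in>G. c g \<in> tga_carrier UNIV) \<and> m = (\<Sum>g\<in>G. act g (c g))))"

definition tga_torsion :: "('m::ab_group_add \<Rightarrow> (('i \<Rightarrow> int) \<Rightarrow> 'f::field) \<Rightarrow> 'm) \<Rightarrow> ('i \<Rightarrow> int) set \<Rightarrow> bool" where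
  "tga_torsion act B \<longleftrightarrow> (\<forall>m. \<exists>s\<in>tga_carrier B. s \<noteq> tga_zero \<and> act m s = 0)"

definition Fspan :: "(('i \<Rightarrow> int) \<Rightarrow> ('i \<Rightarrow> int) \<Rightarrow> 'f::field) \<Rightarrow>
    ('m::ab_group_add \<Rightarrow> (('i \<Rightarrow> int) \<Rightarrow> 'f) \<Rightarrow> 'm) \<Rightarrow> 'm set \<Rightarrow> 'm set" where
  "Fspan \<tau> act S = {(\<Sum>w\<in>T. act w (tga_scalar \<tau> (c w))) | T c. finite T \<and> T \<subseteq> S}"

definition Fdim :: "(('i \<Rightarrow> int) \<Rightarrow> ('i \<Rightarrow> int) \<Rightarrow> 'f::field) \<Rightarrow>
    ('m::ab_group_add \<Rightarrow> (('i \<Rightarrow> int) \<Rightarrow> 'f) \<Rightarrow> 'm) \<Rightarrow> 'm set \<Rightarrow> nat" where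
  "Fdim \<tau> act S = (LEAST k. \<exists>T. finite T \<and> card T = k \<and> T \<subseteq> Fspan \<tau> act S \<and>
                       Fspan \<tau> act S \<subseteq> Fspan \<tau> act T)"

text \<open>W V^k, for W = span W0 and V = span V0: spanned by w v_1 ... v_k.\<close>
definition WVpow :: "(('i \<Rightarrow> int) \<Rightarrow> ('i \<Rightarrow> int) \<Rightarrow> 'f::field) \<Rightarrow>
    ('m::ab_group_add \<Rightarrow> (('i \<Rightarrow> int) \<Rightarrow> 'f) \<Rightarrow> 'm) \<Rightarrow> 'm set \<Rightarrow> (('i \<Rightarrow> int) \<Rightarrow> 'f) set \<Rightarrow> nat \<Rightarrow> 'm set" where
  "WVpow \<tau> act W0 V0 k = Fspan \<tau> act {act w (tga_prod \<tau> vs) | w vs. w \<in> W0 \<and> length vs = k \<and> set vs \<subseteq> V0}"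

text \<open>Gelfand-Kirillov dimension (over F): sup over finite-dimensional subspaces W of M and
  V of F*A of limsup_k log dim(W V^k) / log k.\<close>
definition gk :: "(('i \<Rightarrow> int) \<Rightarrow> ('i \<Rightarrow> int) \<Rightarrow> 'f::field) \<Rightarrow>
    ('m::ab_group_add \<Rightarrow> (('i \<Rightarrow> int) \<Rightarrow> 'f) \<Rightarrow> 'm) \<Rightarrow> ereal" where
  "gk \<tau> act = (SUP WV \<in> {(W0, V0). finite W0 \<and> finite V0 \<and> V0 \<subseteq> tga_carrier UNIV}.
      limsup (\<lambda>k. let d = Fdim \<tau> act (WVpow \<tau> act (fst WV) (snd WV) k) in
                   if d = 0 then - \<infinity> else ereal (ln (real d) / ln (real k))))"

definition tga_nonzero :: "('i \<Rightarrow> int) set \<Rightarrow> (('i \<Rightarrow> int) \<Rightarrow> 'f::field) set" where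
  "tga_nonzero B = tga_carrier B - {tga_zero}"

text \<open>(Q, phi) is the (right) Ore localization (F*A) S^-1: phi an injective ring hom,
  S mapped to units, every element of the form phi(a) phi(s)^-1.\<close>
definition right_quotient_ring :: "(('i \<Rightarrow> int) \<Rightarrow> ('i \<Rightarrow> int) \<Rightarrow> 'f::field) \<Rightarrow>
    (('i \<Rightarrow> int) \<Rightarrow> 'f) set \<Rightarrow> ((('i \<Rightarrow> int) \<Rightarrow> 'f) \<Rightarrow> 'q::ring_1) \<Rightarrow> bool" where
  "right_quotient_ring \<tau> S \<phi> \<longleftrightarrow>
     (\<forall>p\<in>tga_carrier UNIV. \<forall>q\<in>tga_carrier UNIV. \<phi> (tga_add p q) = \<phi> p + \<phi> q) \<and>
     (\<forall>p\<in>tga_carrier UNIV. \<forall>q\<in>tga_carrier UNIV. \<phi> (tga_mult \<tau> p q) = \<phi> p * \<phi> q) \<and>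
     \<phi> (tga_one \<tau>) = 1 \<and>
     inj_on \<phi> (tga_carrier UNIV) \<and>
     (\<forall>s\<in>S. \<exists>t. \<phi> s * t = 1 \<and> t * \<phi> s = 1) \<and>
     (\<forall>x. \<exists>a\<in>tga_carrier UNIV. \<exists>s\<in>S. \<exists>t. \<phi> s * t = 1 \<and> x = \<phi> a * t)"

text \<open>(N, actQ, iota) is the localized module M S^-1 = M \<otimes> (F*A)S^-1: a right Q-module with an
  F*A-linear map iota whose kernel is the S-torsion of M and such that every element
  is iota(m) phi(s)^-1.\<close>
definition module_of_fractions :: "(('i \<Rightarrow> int) \<Rightarrow> ('i \<Rightarrow> int) \<Rightarrow> 'f::field) \<Rightarrow>
    ('m::ab_group_add \<Rightarrow> (('i \<Rightarrow> int) \<Rightarrow> 'f) \<Rightarrow> 'm) \<Rightarrow> (('i \<Rightarrow> int) \<Rightarrow> 'f) set \<Rightarrow>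
    ((('i \<Rightarrow> int) \<Rightarrow> 'f) \<Rightarrow> 'q::ring_1) \<Rightarrow> ('v::ab_group_add \<Rightarrow> 'q \<Rightarrow> 'v) \<Rightarrow> ('m \<Rightarrow> 'v) \<Rightarrow> bool" where
  "module_of_fractions \<tau> act S \<phi> actQ \<iota> \<longleftrightarrow>
     (\<forall>v x y. actQ v (x + y) = actQ v x + actQ v y) \<and>
     (\<forall>v w x. actQ (v + w) x = actQ v x + actQ w x) \<and>
     (\<forall>v x y. actQ v (x * y) = actQ (actQ v x) y) \<and>
     (\<forall>v. actQ v 1 = v) \<and>
     (\<forall>m m'. \<iota> (m + m') = \<iota> m + \<iota> m') \<and>
     (\<forall>m. \<forall>a\<in>tga_carrier UNIV. \<iota> (act m a) = actQ (\<iota> m) (\<phi> a)) \<and>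
     (\<forall>v. \<exists>m. \<exists>s\<in>S. \<exists>t. \<phi> s * t = 1 \<and> v = actQ (\<iota> m) t) \<and>
     (\<forall>m. \<iota> m = 0 \<longleftrightarrow> (\<exists>s\<in>S. act m s = 0))"

text \<open>D: quotient division ring of F*B inside Q, i.e. {phi(b) phi(s)^-1}.\<close>
definition quot_div :: "('i \<Rightarrow> int) set \<Rightarrow> ((('i \<Rightarrow> int) \<Rightarrow> 'f::field) \<Rightarrow> 'q::ring_1) \<Rightarrow> 'q set" where
  "quot_div B \<phi> = {\<phi> b * t | b s t. b \<in> tga_carrier B \<and> s \<in> tga_nonzero B \<and> \<phi> s * t = 1}"

end

theory Submission
  imports Defs "HOL-Library.FuncSet"
begin

text \<open>
  Write \<open>B = \<langle>x\<^sub>i : i \<in> I\<rangle>\<close>. Since \<open>gk(M) = r\<close>, every \<open>m \<in> M\<close> is torsion over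
  \<open>F * \<langle>B, x\<^sub>j\<rangle>\<close> for each \<open>j \<notin> I\<close>: otherwise the elements \<open>m a\<close>, with \<open>a\<close> ranging over the
  exponent box \<open>[0,k]\<^sup>r\<^sup>+\<^sup>1\<close>, are \<open>F\<close>-independent and lie in \<open>m V\<^sup>k\<close> for the span \<open>V\<close> of the
  0/1 monomials, so \<open>gk(M) \<ge> r + 1\<close>. Writing such a relation as \<open>\<Sum>\<^sub>k m x\<^sub>j\<^sup>k s\<^sub>k = 0\<close> with
  \<open>s\<^sub>k \<in> F * B\<close> and multiplying it by \<open>x\<^sub>j\<^sup>l\<close> gives a relation between \<open>m x\<^sub>j\<^sup>k\<^sup>+\<^sup>l\<close> with
  coefficients in \<open>\<S>\<close>; in \<open>M\<S>\<^sup>-\<^sup>1\<close> these coefficients are invertible, so all \<open>m x\<^sub>j\<^sup>N\<close> lie in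
  the \<open>D\<close>-span of the finitely many \<open>m x\<^sub>j\<^sup>i\<close> with \<open>lo \<le> i < hi\<close>, where \<open>lo\<close> and \<open>hi\<close> are
  the extreme exponents of the relation. Adjoining the generators outside \<open>I\<close> one at a time (the Ore condition moves
  \<open>D\<close>-coefficients past \<open>F * \<langle>B, \<dots>\<rangle>\<close>) shows that \<open>m (F * A)\<close> spans a finite-dimensional
  \<open>D\<close>-subspace, and finite generation of \<open>M\<close> finishes the argument. Finally \<open>M\<S>\<^sup>-\<^sup>1 \<noteq> 0\<close>
  because \<open>M\<close> is not \<open>F * B\<close>-torsion.
\<close>

lemma right_inverse_imp_left_inverse:
  fixes x :: "'a::monoid_mult"
  assumes "x * t0 = 1" "t0 * x = 1" "x * t = 1"
  shows "t * x = 1"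
  by (metis assms mult.assoc mult_1_left mult_1_right)

lemma sum_list_indicator_less:
  assumes "0 \<le> c" "c \<le> int k"
  shows "(\<Sum>t\<leftarrow>[0..<k]. if int t < c then 1 else 0) = (c::int)"
proof -
  have "(\<Sum>t\<leftarrow>[0..<k]. if int t < c then 1 else 0) = (\<Sum>t\<in>{0..<k}. if int t < c then 1 else (0::int))"
    by (induction k) auto
  also have "\<dots> = card {t\<in>{0..<k}. int t < c}"
    by (simp add: sum.inter_filter[symmetric])
  also have "{t\<in>{0..<k}. int t < c} = {0..<nat c}"
    using assms by auto
  finally show ?thesis
    using assms by simp
qed

lemma int_two_sided_induct:
  fixes lo hi :: int
  assumes "lo \<le> hi"
    and window: "\<And>N. lo \<le> N \<Longrightarrow> N < hi \<Longrightarrow> Q N"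
    and up: "\<And>N. hi \<le> N \<Longrightarrow> (\<And>k. lo \<le> k \<Longrightarrow> k < N \<Longrightarrow> Q k) \<Longrightarrow> Q N"
    and down: "\<And>N. N < lo \<Longrightarrow> (\<And>k. N < k \<Longrightarrow> k < hi \<Longrightarrow> Q k) \<Longrightarrow> Q N"
  shows "Q N"
proof -
  have above: "Q N" if "lo \<le> N" for N
    using that
  proof (induction "nat (N - lo)" arbitrary: N rule: less_induct)
    case less
    then show ?case
      by (cases "N < hi") (auto intro: window up less.hyps)
  qed
  have below: "Q N" if "N < hi" for N
    using that
  proof (induction "nat (hi - N)" arbitrary: N rule: less_induct)
    case less
    then show ?case
      by (cases "lo \<le> N") (auto intro: above down less.hyps)
  qed
  show ?thesis
    using assms(1) by (cases "lo \<le> N") (auto intro: above below)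
qed

subsection \<open>The group \<open>A\<close>\<close>

lemma gdiff_eq_iff: "gdiff y a = c \<longleftrightarrow> a = gdiff y c"
  by (auto simp: gdiff_def fun_eq_iff algebra_simps)

lemma gdiff_gadd [simp]: "gdiff (gadd a b) a = b" "gdiff (gadd b a) a = b"
  by (auto simp: gdiff_def gadd_def fun_eq_iff)

lemma gadd_gdiff [simp]: "gadd a (gdiff c a) = c" "gadd (gdiff c a) a = c"
  by (auto simp: gdiff_def gadd_def fun_eq_iff)

lemma gdiff_gdiff [simp]: "gdiff y (gdiff y c) = c"
  by (auto simp: gdiff_def fun_eq_iff)

lemma gzero_simps [simp]: "gadd gzero a = a" "gadd a gzero = a" "gdiff a gzero = a" "gdiff a a = gzero"
  by (auto simp: gadd_def gdiff_def gzero_def fun_eq_iff)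

lemma gadd_in_subgrp: "a \<in> subgrp K \<Longrightarrow> b \<in> subgrp K \<Longrightarrow> gadd a b \<in> subgrp K"
  by (auto simp: subgrp_def gadd_def)

lemma gdiff_in_subgrp_iff: "a \<in> subgrp K \<Longrightarrow> gdiff c a \<in> subgrp K \<longleftrightarrow> c \<in> subgrp K"
  by (auto simp: subgrp_def gdiff_def)

lemma gzero_in_subgrp [simp]: "gzero \<in> subgrp K"
  by (simp add: subgrp_def gzero_def)

lemma subgrp_mono: "K \<subseteq> L \<Longrightarrow> subgrp K \<subseteq> subgrp L"
  by (auto simp: subgrp_def)

lemma subgrp_UNIV [simp]: "subgrp UNIV = UNIV"
  by (auto simp: subgrp_def)

definition box :: "'i set \<Rightarrow> nat \<Rightarrow> ('i \<Rightarrow> int) set" where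
  "box J k = {a \<in> subgrp J. \<forall>i. 0 \<le> a i \<and> a i \<le> int k}"

lemma box_eq_image_PiE:
  "box J k = (\<lambda>f i. if i \<in> J then f i else 0) ` PiE J (\<lambda>_. {0..int k})"
proof
  show "box J k \<subseteq> (\<lambda>f i. if i \<in> J then f i else 0) ` PiE J (\<lambda>_. {0..int k})"
    by (auto simp: box_def subgrp_def fun_eq_iff intro!: image_eqI[of _ _ "restrict _ J"])
qed (auto simp: box_def subgrp_def PiE_def Pi_def)

lemma
  assumes "finite J"
  shows finite_box: "finite (box J k)"
    and card_box: "card (box J k) = (k + 1) ^ card J"
proof -
  have "inj_on (\<lambda>f i. if i \<in> J then f i else 0) (PiE J (\<lambda>_. {0..int k}))"
    by (rule inj_onI) (metis (no_types, lifting) PiE_ext)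
  moreover have "nat (int k + 1) = k + 1"
    by simp
  ultimately show "card (box J k) = (k + 1) ^ card J"
    using assms by (simp add: box_eq_image_PiE card_image card_PiE)
  show "finite (box J k)"
    using assms by (simp add: box_eq_image_PiE finite_PiE)
qed

definition xpow :: "'i \<Rightarrow> int \<Rightarrow> 'i \<Rightarrow> int" where
  "xpow j k = (\<lambda>i. if i = j then k else 0)"

lemma gdiff_xpow_same [simp]: "gdiff y (xpow j k) j = y j - k"
  by (simp add: gdiff_def xpow_def)

lemma gadd_xpow: "gadd (xpow j k) (xpow j l) = xpow j (k + l)"
  by (auto simp: gadd_def xpow_def fun_eq_iff)

subsection \<open>Monomials, supports and decompositions in \<open>F * A\<close>\<close>

definition tga_monom :: "('i \<Rightarrow> int) \<Rightarrow> 'f \<Rightarrow> ('i \<Rightarrow> int) \<Rightarrow> 'f::field" where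
  "tga_monom a l = (\<lambda>y. if y = a then l else 0)"

definition tga_sum :: "'k set \<Rightarrow> ('k \<Rightarrow> ('i \<Rightarrow> int) \<Rightarrow> 'f::field) \<Rightarrow> ('i \<Rightarrow> int) \<Rightarrow> 'f" where
  "tga_sum K f = (\<lambda>y. \<Sum>k\<in>K. f k y)"

definition tga_restrict :: "('i \<Rightarrow> int) set \<Rightarrow> (('i \<Rightarrow> int) \<Rightarrow> 'f) \<Rightarrow> ('i \<Rightarrow> int) \<Rightarrow> 'f::field" where
  "tga_restrict B p = (\<lambda>c. if c \<in> B then p c else 0)"

lemma tga_mult_monom_left:
  "tga_mult \<tau> (tga_monom a l) q = (\<lambda>c. l * q (gdiff c a) * \<tau> a (gdiff c a))"
proof (cases "l = 0")
  case True
  then have "{x. tga_monom a l x \<noteq> 0} = {}"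
    by (auto simp: tga_monom_def)
  then show ?thesis
    using True by (simp add: tga_mult_def fun_eq_iff)
next
  case False
  then have "{x. tga_monom a l x \<noteq> 0} = {a}"
    by (auto simp: tga_monom_def)
  then show ?thesis
    by (simp add: tga_mult_def fun_eq_iff tga_monom_def)
qed

lemma tga_mult_monom_right:
  assumes "finite {x. p x \<noteq> 0}"
  shows "tga_mult \<tau> p (tga_monom c 1) = (\<lambda>y. p (gdiff y c) * \<tau> (gdiff y c) c)"
proof
  fix y
  have "tga_mult \<tau> p (tga_monom c 1) y =
      (\<Sum>a\<in>{x. p x \<noteq> 0}. if a = gdiff y c then p a * \<tau> a (gdiff y a) else 0)"
    unfolding tga_mult_def tga_monom_def by (rule sum.cong) (auto simp: gdiff_eq_iff)
  also have "\<dots> = p (gdiff y c) * \<tau> (gdiff y c) c"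
    using assms by (simp add: sum.delta gdiff_eq_iff)
  finally show "tga_mult \<tau> p (tga_monom c 1) y = p (gdiff y c) * \<tau> (gdiff y c) c" .
qed

lemma tga_mult_monom_monom:
  "tga_mult \<tau> (tga_monom a l) (tga_monom b m) = tga_monom (gadd a b) (l * m * \<tau> a b)"
  unfolding tga_mult_monom_left by (rule ext) (auto simp: tga_monom_def gdiff_eq_iff)

lemma tga_scalar_eq_monom: "tga_scalar \<tau> l = tga_monom gzero (l / \<tau> gzero gzero)"
  by (simp add: tga_scalar_def tga_monom_def fun_eq_iff)

lemma tga_one_eq_monom: "tga_one \<tau> = tga_monom gzero (1 / \<tau> gzero gzero)"
  by (simp add: tga_one_def tga_scalar_eq_monom)

lemma tga_mult_support:
  assumes "tga_mult \<tau> p q c \<noteq> 0"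
  obtains a b where "p a \<noteq> 0" "q b \<noteq> 0" "c = gadd a b"
proof -
  obtain a where "p a \<noteq> 0" "p a * q (gdiff c a) * \<tau> a (gdiff c a) \<noteq> 0"
    using assms unfolding tga_mult_def by (metis (mono_tags, lifting) mem_Collect_eq sum.neutral)
  then show ?thesis
    using that[of a "gdiff c a"] by simp
qed

lemma tga_sum_insert:
  "finite K \<Longrightarrow> k \<notin> K \<Longrightarrow> tga_sum (insert k K) f = tga_add (f k) (tga_sum K f)"
  by (simp add: tga_sum_def tga_add_def)

lemma tga_sum_empty [simp]: "tga_sum {} f = tga_zero"
  by (simp add: tga_sum_def tga_zero_def)

lemma tga_carrier_UNIV: "p \<in> tga_carrier B \<Longrightarrow> p \<in> tga_carrier UNIV"
  by (auto simp: tga_carrier_def)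

lemma tga_carrier_mono: "p \<in> tga_carrier B \<Longrightarrow> B \<subseteq> B' \<Longrightarrow> p \<in> tga_carrier B'"
  by (auto simp: tga_carrier_def)

lemma tga_carrier_zero [simp]: "tga_zero \<in> tga_carrier B"
  by (auto simp: tga_carrier_def tga_zero_def)

lemma tga_carrier_monom: "a \<in> B \<Longrightarrow> tga_monom a l \<in> tga_carrier B"
  by (auto simp: tga_carrier_def tga_monom_def intro: finite_subset[of _ "{a}"])

lemma tga_carrier_UNIV_simps [simp]:
  "tga_monom a l \<in> tga_carrier UNIV" "tga_scalar \<tau> u \<in> tga_carrier UNIV"
  by (simp_all add: tga_carrier_monom tga_scalar_eq_monom)

lemma tga_carrier_add:
  assumes "p \<in> tga_carrier B" "q \<in> tga_carrier B"
  shows "tga_add p q \<in> tga_carrier B"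
proof -
  have "{c. tga_add p q c \<noteq> 0} \<subseteq> {a. p a \<noteq> 0} \<union> {b. q b \<noteq> 0}"
    by (auto simp: tga_add_def)
  then show ?thesis
    using assms unfolding tga_carrier_def by (auto intro: finite_subset)
qed

lemma tga_carrier_sum:
  "finite K \<Longrightarrow> (\<And>k. k \<in> K \<Longrightarrow> f k \<in> tga_carrier B) \<Longrightarrow> tga_sum K f \<in> tga_carrier B"
  by (induction K rule: finite_induct) (auto simp: tga_sum_insert intro: tga_carrier_add)

lemma tga_carrier_mult:
  assumes "p \<in> tga_carrier (subgrp K)" "q \<in> tga_carrier (subgrp K)"
  shows "tga_mult \<tau> p q \<in> tga_carrier (subgrp K)"
proof -
  let ?sums = "(\<lambda>(a, b). gadd a b) ` ({a. p a \<noteq> 0} \<times> {b. q b \<noteq> 0})"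
  have "{c. tga_mult \<tau> p q c \<noteq> 0} \<subseteq> ?sums"
    by (force elim: tga_mult_support)
  moreover have "finite ?sums" "?sums \<subseteq> subgrp K"
    using assms by (auto simp: tga_carrier_def intro: gadd_in_subgrp)
  ultimately show ?thesis
    unfolding tga_carrier_def by (auto intro: finite_subset)
qed

lemma tga_carrier_mult_UNIV:
  "p \<in> tga_carrier B \<Longrightarrow> q \<in> tga_carrier B' \<Longrightarrow> tga_mult \<tau> p q \<in> tga_carrier UNIV"
  using tga_carrier_mult[of p UNIV q] by (simp add: tga_carrier_UNIV)

lemma tga_restrict_carrier: "p \<in> tga_carrier UNIV \<Longrightarrow> tga_restrict B p \<in> tga_carrier B"
  by (auto simp: tga_carrier_def tga_restrict_def split: if_splits intro: finite_subset)

lemma tga_restrict_id: "p \<in> tga_carrier B \<Longrightarrow> tga_restrict B p = p"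
  by (auto simp: tga_carrier_def tga_restrict_def fun_eq_iff)

text \<open>Multiplication by an element of \<open>F * \<langle>x\<^sub>k : k \<in> K\<rangle>\<close> preserves the cosets of that subgroup.\<close>
lemma tga_restrict_mult_left:
  assumes "s \<in> tga_carrier (subgrp K)"
  shows "tga_restrict (subgrp K) (tga_mult \<tau> s p) = tga_mult \<tau> s (tga_restrict (subgrp K) p)"
proof
  fix c
  have sK: "a \<in> subgrp K" if "s a \<noteq> 0" for a
    using assms that by (auto simp: tga_carrier_def)
  show "tga_restrict (subgrp K) (tga_mult \<tau> s p) c = tga_mult \<tau> s (tga_restrict (subgrp K) p) c"
    unfolding tga_restrict_def tga_mult_def
    by (auto simp: gdiff_in_subgrp_iff[OF sK] intro!: sum.neutral sum.cong)
qed

text \<open>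
  The coefficient of \<open>x\<^sub>j\<^sup>k\<close> in \<open>p\<close>, where \<open>p = \<Sum>\<^sub>k x\<^sub>j\<^sup>k p\<^sub>k\<close> with \<open>p\<^sub>k\<close> free of \<open>x\<^sub>j\<close>; the
  division compensates for the cocycle.
\<close>
definition tga_coeff :: "(('i \<Rightarrow> int) \<Rightarrow> ('i \<Rightarrow> int) \<Rightarrow> 'f::field) \<Rightarrow> 'i \<Rightarrow> (('i \<Rightarrow> int) \<Rightarrow> 'f) \<Rightarrow>
    int \<Rightarrow> ('i \<Rightarrow> int) \<Rightarrow> 'f" where
  "tga_coeff \<tau> j p k = (\<lambda>z. if z j = 0 then p (gadd z (xpow j k)) / \<tau> (xpow j k) z else 0)"

definition tga_degrees :: "'i \<Rightarrow> (('i \<Rightarrow> int) \<Rightarrow> 'f::field) \<Rightarrow> int set" where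
  "tga_degrees j p = (\<lambda>y. y j) ` {y. p y \<noteq> 0}"

lemma finite_tga_degrees: "p \<in> tga_carrier B \<Longrightarrow> finite (tga_degrees j p)"
  by (simp add: tga_degrees_def tga_carrier_def)

lemma tga_degrees_nonempty: "p \<noteq> tga_zero \<Longrightarrow> tga_degrees j p \<noteq> {}"
  by (auto simp: tga_degrees_def tga_zero_def fun_eq_iff)

lemma tga_coeff_carrier:
  assumes "p \<in> tga_carrier (subgrp (insert j K))"
  shows "tga_coeff \<tau> j p k \<in> tga_carrier (subgrp K)"
proof -
  have "{z. tga_coeff \<tau> j p k z \<noteq> 0} \<subseteq> (\<lambda>y. gdiff y (xpow j k)) ` {y. p y \<noteq> 0}"
    by (auto simp: tga_coeff_def split: if_splits intro!: image_eqI[of _ _ "gadd _ (xpow j k)"])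
  moreover have "{z. tga_coeff \<tau> j p k z \<noteq> 0} \<subseteq> subgrp K"
    using assms
    by (force simp: tga_coeff_def tga_carrier_def subgrp_def gadd_def xpow_def split: if_splits)
  ultimately show ?thesis
    using assms unfolding tga_carrier_def by (auto intro: finite_subset)
qed

subsection \<open>Identities that depend on the cocycle\<close>

locale twisted_group_algebra =
  fixes \<tau> :: "('i \<Rightarrow> int) \<Rightarrow> ('i \<Rightarrow> int) \<Rightarrow> 'f::field"
  assumes cocycle: "two_cocycle \<tau>"
begin

lemma cocycle_nonzero [simp]: "\<tau> a b \<noteq> 0"
  using cocycle by (simp add: two_cocycle_def)

text \<open>Not simp rules: each right-hand side is an instance of its left-hand side.\<close>
lemma cocycle_gzero_left: "\<tau> gzero c = \<tau> gzero gzero"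
proof -
  have "\<tau> gzero gzero * \<tau> (gadd gzero gzero) c = \<tau> gzero c * \<tau> gzero (gadd gzero c)"
    using cocycle unfolding two_cocycle_def by blast
  then have "\<tau> gzero gzero * \<tau> gzero c = \<tau> gzero c * \<tau> gzero c"
    by simp
  then show ?thesis
    by simp
qed

lemma cocycle_gzero_right: "\<tau> c gzero = \<tau> gzero gzero"
proof -
  have "\<tau> c gzero * \<tau> (gadd c gzero) gzero = \<tau> gzero gzero * \<tau> c (gadd gzero gzero)"
    using cocycle unfolding two_cocycle_def by blast
  then have "\<tau> c gzero * \<tau> c gzero = \<tau> gzero gzero * \<tau> c gzero"
    by simp
  then show ?thesis
    by simp
qed

lemma tga_mult_monom_scalar: "tga_mult \<tau> (tga_monom a l) (tga_scalar \<tau> u) = tga_monom a (l * u)"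
proof
  fix c
  show "tga_mult \<tau> (tga_monom a l) (tga_scalar \<tau> u) c = tga_monom a (l * u) c"
    unfolding tga_mult_monom_left tga_scalar_eq_monom
    using cocycle_gzero_right[of a] by (cases "c = a") (auto simp: tga_monom_def gdiff_eq_iff)
qed

lemma tga_mult_scalar_left: "tga_mult \<tau> (tga_scalar \<tau> u) q = (\<lambda>c. u * q c)"
proof
  fix c
  show "tga_mult \<tau> (tga_scalar \<tau> u) q c = u * q c"
    unfolding tga_mult_monom_left tga_scalar_eq_monom using cocycle_gzero_left[of c] by simp
qed

lemma tga_one_neq_zero: "tga_one \<tau> \<noteq> tga_zero"
proof
  assume "tga_one \<tau> = tga_zero"
  then have "tga_one \<tau> gzero = 0"
    by (simp add: tga_zero_def)
  then show False
    by (simp add: tga_one_eq_monom tga_monom_def)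
qed

lemma tga_prod_monoms:
  "\<exists>l. l \<noteq> 0 \<and> tga_prod \<tau> (map (\<lambda>t. tga_monom (f t) 1) xs) = tga_monom (\<lambda>i. \<Sum>t\<leftarrow>xs. f t i) l"
proof (induction xs)
  case Nil
  show ?case
    by (intro exI[of _ "1 / \<tau> gzero gzero"]) (simp add: tga_prod_def tga_one_eq_monom gzero_def)
next
  case (Cons x xs)
  then obtain l where l: "l \<noteq> 0"
    "tga_prod \<tau> (map (\<lambda>t. tga_monom (f t) 1) xs) = tga_monom (\<lambda>i. \<Sum>t\<leftarrow>xs. f t i) l"
    by blast
  have "tga_prod \<tau> (map (\<lambda>t. tga_monom (f t) 1) (x # xs))
      = tga_monom (\<lambda>i. \<Sum>t\<leftarrow>x # xs. f t i) (l * \<tau> (f x) (\<lambda>i. \<Sum>t\<leftarrow>xs. f t i))"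
    using l(2) by (simp add: tga_prod_def tga_mult_monom_monom gadd_def)
  moreover have "l * \<tau> (f x) (\<lambda>i. \<Sum>t\<leftarrow>xs. f t i) \<noteq> 0"
    using l(1) by simp
  ultimately show ?case
    by blast
qed

lemma tga_decompose:
  assumes "p \<in> tga_carrier B"
  shows "p = tga_sum (tga_degrees j p) (\<lambda>k. tga_mult \<tau> (tga_monom (xpow j k) 1) (tga_coeff \<tau> j p k))"
proof
  fix y
  have "tga_mult \<tau> (tga_monom (xpow j k) 1) (tga_coeff \<tau> j p k) y = (if k = y j then p y else 0)" for k
    by (auto simp: tga_mult_monom_left tga_coeff_def)
  then have "tga_sum (tga_degrees j p) (\<lambda>k. tga_mult \<tau> (tga_monom (xpow j k) 1) (tga_coeff \<tau> j p k)) y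
      = (if y j \<in> tga_degrees j p then p y else 0)"
    using finite_tga_degrees[OF assms, of j] by (simp add: tga_sum_def)
  also have "\<dots> = p y"
    by (cases "p y = 0") (auto simp: tga_degrees_def)
  finally show "p y = tga_sum (tga_degrees j p)
      (\<lambda>k. tga_mult \<tau> (tga_monom (xpow j k) 1) (tga_coeff \<tau> j p k)) y"
    by simp
qed

lemma tga_coeff_nonzero:
  assumes "k \<in> tga_degrees j p"
  shows "tga_coeff \<tau> j p k \<noteq> tga_zero"
proof -
  obtain y where y: "p y \<noteq> 0" "y j = k"
    using assms unfolding tga_degrees_def by blast
  have "tga_coeff \<tau> j p k (gdiff y (xpow j k)) \<noteq> 0"
    using y by (simp add: tga_coeff_def)
  then show ?thesis
    by (auto simp: tga_zero_def)
qed

definition tga_twist :: "('i \<Rightarrow> int) \<Rightarrow> (('i \<Rightarrow> int) \<Rightarrow> 'f) \<Rightarrow> ('i \<Rightarrow> int) \<Rightarrow> 'f" where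
  "tga_twist c p = (\<lambda>z. p z * \<tau> z c / \<tau> c z)"

lemma tga_mult_monom_commute:
  assumes "p \<in> tga_carrier B"
  shows "tga_mult \<tau> p (tga_monom c 1) = tga_mult \<tau> (tga_monom c 1) (tga_twist c p)"
  using assms
  by (simp add: tga_mult_monom_right tga_mult_monom_left tga_twist_def tga_carrier_def)

lemma tga_twist_eq_zero_iff [simp]: "tga_twist c p z = 0 \<longleftrightarrow> p z = 0"
  by (simp add: tga_twist_def)

text \<open>A monomial with exponents in \<open>[0,k]\<close> is, up to a scalar, a product of \<open>k\<close> monomials
  with exponents in \<open>{0,1}\<close>: the \<open>t\<close>-th factor records which exponents exceed \<open>t\<close>.\<close>
lemma tga_prod_box:
  assumes "a \<in> box J k"
  obtains vs l where "length vs = k" "set vs \<subseteq> (\<lambda>b. tga_monom b 1) ` box J 1" "l \<noteq> 0"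
    "tga_prod \<tau> vs = tga_monom a l"
proof -
  define bit where "bit t = (\<lambda>i. if int t < a i then 1 else (0::int))" for t :: nat
  obtain l where l: "l \<noteq> 0"
    "tga_prod \<tau> (map (\<lambda>t. tga_monom (bit t) 1) [0..<k]) = tga_monom (\<lambda>i. \<Sum>t\<leftarrow>[0..<k]. bit t i) l"
    using tga_prod_monoms by blast
  have "(\<lambda>i. \<Sum>t\<leftarrow>[0..<k]. bit t i) = a"
  proof
    fix i
    have "0 \<le> a i" "a i \<le> int k"
      using assms by (simp_all add: box_def)
    then show "(\<Sum>t\<leftarrow>[0..<k]. bit t i) = a i"
      by (simp add: bit_def sum_list_indicator_less)
  qed
  moreover have "bit t \<in> box J 1" for t
    using assms by (auto simp: bit_def box_def subgrp_def)
  ultimately show ?thesis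
    using l by (intro that[of "map (\<lambda>t. tga_monom (bit t) 1) [0..<k]" l]) force+
qed

end

lemma limsup_ln_ratio_ge:
  fixes d :: "nat \<Rightarrow> nat"
  assumes growth: "\<And>k. (k + 1) ^ n \<le> d k"
  shows "ereal (real n) \<le> limsup (\<lambda>k. if d k = 0 then - \<infinity> else ereal (ln (real (d k)) / ln (real k)))"
proof (rule le_Limsup)
  have "ereal (real n) \<le> (if d k = 0 then - \<infinity> else ereal (ln (real (d k)) / ln (real k)))"
    if "2 \<le> k" for k
  proof -
    have pos: "0 < real ((k + 1) ^ n)"
      by simp
    then have "d k \<noteq> 0"
      using growth[of k] by linarith
    have "real n * ln (real k) \<le> real n * ln (real k + 1)"
      using that by (intro mult_left_mono) auto
    also have "\<dots> = ln (real ((k + 1) ^ n))"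
      by (simp add: ln_realpow add.commute)
    also have "\<dots> \<le> ln (real (d k))"
      using ln_mono[OF _ pos] growth[of k] by (simp only: of_nat_le_iff)
    finally have "real n \<le> ln (real (d k)) / ln (real k)"
      using that by (simp add: pos_le_divide_eq)
    then show ?thesis
      using \<open>d k \<noteq> 0\<close> by simp
  qed
  then show "\<forall>\<^sub>F k in sequentially. ereal (real n) \<le>
      (if d k = 0 then - \<infinity> else ereal (ln (real (d k)) / ln (real k)))"
    by (rule eventually_sequentiallyI)
qed simp

subsection \<open>Modules over \<open>F * A\<close> and the growth of torsion-free orbits\<close>

definition tga_torsion_free_elem ::
    "('m::ab_group_add \<Rightarrow> (('i \<Rightarrow> int) \<Rightarrow> 'f::field) \<Rightarrow> 'm) \<Rightarrow> ('i \<Rightarrow> int) set \<Rightarrow> 'm \<Rightarrow> bool" where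
  "tga_torsion_free_elem act B m \<longleftrightarrow> (\<forall>s\<in>tga_carrier B. s \<noteq> tga_zero \<longrightarrow> act m s \<noteq> 0)"

locale tga_module = twisted_group_algebra \<tau>
  for \<tau> :: "('i \<Rightarrow> int) \<Rightarrow> ('i \<Rightarrow> int) \<Rightarrow> 'f::field" +
  fixes act :: "'m::ab_group_add \<Rightarrow> (('i \<Rightarrow> int) \<Rightarrow> 'f) \<Rightarrow> 'm"
  assumes module: "right_tga_module \<tau> act"
begin

lemma act_add_right:
  "p \<in> tga_carrier UNIV \<Longrightarrow> q \<in> tga_carrier UNIV \<Longrightarrow> act m (tga_add p q) = act m p + act m q"
  using module by (simp add: right_tga_module_def)

lemma act_add_left: "p \<in> tga_carrier UNIV \<Longrightarrow> act (m + m') p = act m p + act m' p"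
  using module by (simp add: right_tga_module_def)

lemma act_mult:
  "p \<in> tga_carrier UNIV \<Longrightarrow> q \<in> tga_carrier UNIV \<Longrightarrow> act m (tga_mult \<tau> p q) = act (act m p) q"
  using module by (simp add: right_tga_module_def)

lemma act_one: "act m (tga_one \<tau>) = m"
  using module by (simp add: right_tga_module_def)

lemma act_zero_right [simp]: "act m tga_zero = 0"
proof -
  have "tga_add tga_zero tga_zero = (tga_zero :: ('i \<Rightarrow> int) \<Rightarrow> 'f)"
    by (simp add: tga_add_def tga_zero_def)
  then show ?thesis
    using act_add_right[of tga_zero tga_zero m] by simp
qed

lemma act_zero_left [simp]: "p \<in> tga_carrier UNIV \<Longrightarrow> act 0 p = 0"
  using act_add_left[of p 0 0] by simp

lemma act_sum_left: "p \<in> tga_carrier UNIV \<Longrightarrow> act (\<Sum>g\<in>G. f g) p = (\<Sum>g\<in>G. act (f g) p)"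
  by (induction G rule: infinite_finite_induct) (auto simp: act_add_left)

lemma act_tga_sum:
  "finite K \<Longrightarrow> (\<And>k. k \<in> K \<Longrightarrow> f k \<in> tga_carrier UNIV) \<Longrightarrow> act m (tga_sum K f) = (\<Sum>k\<in>K. act m (f k))"
  by (induction K rule: finite_induct) (auto simp: tga_sum_insert act_add_right tga_carrier_sum)

sublocale Fvec: vector_space "\<lambda>c x. act x (tga_scalar \<tau> c)"
proof
  fix a b :: 'f and x y :: 'm
  show "act (x + y) (tga_scalar \<tau> a) = act x (tga_scalar \<tau> a) + act y (tga_scalar \<tau> a)"
    by (simp add: act_add_left)
  have "tga_scalar \<tau> (a + b) = tga_add (tga_scalar \<tau> a) (tga_scalar \<tau> b)"
    by (simp add: tga_scalar_def tga_add_def fun_eq_iff add_divide_distrib)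
  then show "act x (tga_scalar \<tau> (a + b)) = act x (tga_scalar \<tau> a) + act x (tga_scalar \<tau> b)"
    by (simp add: act_add_right)
  have "tga_mult \<tau> (tga_scalar \<tau> b) (tga_scalar \<tau> a) = tga_scalar \<tau> (a * b)"
    unfolding tga_mult_scalar_left by (rule ext) (simp add: tga_scalar_def)
  then show "act (act x (tga_scalar \<tau> b)) (tga_scalar \<tau> a) = act x (tga_scalar \<tau> (a * b))"
    by (simp add: act_mult[symmetric])
  show "act x (tga_scalar \<tau> 1) = x"
    using act_one by (simp add: tga_one_def)
qed

lemma act_monom_scale: "act (act m (tga_monom a l)) (tga_scalar \<tau> u) = act m (tga_monom a (l * u))"
  by (simp add: act_mult[symmetric] tga_mult_monom_scalar)

lemma act_monom_shift:
  assumes "p \<in> tga_carrier B"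
  obtains \<sigma> where "\<sigma> \<in> tga_carrier B" "\<sigma> = tga_zero \<longleftrightarrow> p = tga_zero"
    "act (act (act m (tga_monom a 1)) p) (tga_monom b 1) = act (act m (tga_monom (gadd a b) 1)) \<sigma>"
proof -
  define \<sigma> where "\<sigma> = (\<lambda>z. \<tau> a b * tga_twist b p z)"
  have "{z. \<sigma> z \<noteq> 0} = {z. p z \<noteq> 0}"
    by (simp add: \<sigma>_def)
  then have twist: "tga_twist b p \<in> tga_carrier B" and \<sigma>: "\<sigma> \<in> tga_carrier B"
    using assms by (simp_all add: tga_carrier_def)
  have "\<sigma> = tga_zero \<longleftrightarrow> p = tga_zero"
    unfolding tga_zero_def fun_eq_iff \<sigma>_def by simp
  have scale: "act (act m (tga_monom a 1)) (tga_monom b 1)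
      = act (act m (tga_monom (gadd a b) 1)) (tga_scalar \<tau> (\<tau> a b))"
    by (simp add: act_mult[symmetric] tga_mult_monom_monom act_monom_scale)
  have "act (act (act m (tga_monom a 1)) p) (tga_monom b 1)
      = act (act m (tga_monom a 1)) (tga_mult \<tau> p (tga_monom b 1))"
    using assms by (simp add: act_mult tga_carrier_UNIV)
  also have "\<dots> = act (act m (tga_monom a 1)) (tga_mult \<tau> (tga_monom b 1) (tga_twist b p))"
    using assms by (simp add: tga_mult_monom_commute)
  also have "\<dots> = act (act (act m (tga_monom (gadd a b) 1)) (tga_scalar \<tau> (\<tau> a b))) (tga_twist b p)"
    using twist by (simp add: act_mult tga_carrier_UNIV scale)
  also have "\<dots> = act (act m (tga_monom (gadd a b) 1)) \<sigma>"
    using twist by (simp add: act_mult[of "tga_scalar \<tau> _" "tga_twist b p", symmetric] tga_carrier_UNIV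
        tga_mult_scalar_left \<sigma>_def)
  finally show ?thesis
    using that \<sigma> \<open>\<sigma> = tga_zero \<longleftrightarrow> p = tga_zero\<close> by blast
qed

lemma Fspan_eq_span: "Fspan \<tau> act Y = Fvec.span Y"
  by (simp add: Fspan_def Fvec.span_explicit)

lemma Fdim_ge_card_independent:
  assumes "finite G" "\<not> Fvec.dependent E" "E \<subseteq> G"
  shows "card E \<le> Fdim \<tau> act (Fspan \<tau> act G)"
proof -
  let ?P = "\<lambda>k. \<exists>T. finite T \<and> card T = k \<and> T \<subseteq> Fvec.span G \<and> Fvec.span G \<subseteq> Fvec.span T"
  have "?P (card G)"
    using assms(1) Fvec.span_superset[of G] by blast
  then have "?P (Fdim \<tau> act (Fspan \<tau> act G))"
    unfolding Fdim_def Fspan_eq_span Fvec.span_span by (rule LeastI)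
  then obtain T where T: "finite T" "card T = Fdim \<tau> act (Fspan \<tau> act G)" "Fvec.span G \<subseteq> Fvec.span T"
    by blast
  have "E \<subseteq> Fvec.span T"
    using T(3) assms(3) Fvec.span_superset[of G] by blast
  then show ?thesis
    using Fvec.independent_span_bound[OF T(1) assms(2)] T(2) by simp
qed

lemma act_monom_sum_eq_zero:
  assumes tf: "tga_torsion_free_elem act (subgrp J) m"
    and B: "finite B" "B \<subseteq> subgrp J" and sum: "(\<Sum>a\<in>B. act m (tga_monom a (c a))) = 0"
    and "a \<in> B"
  shows "c a = 0"
proof -
  define e where "e = tga_sum B (\<lambda>a. tga_monom a (c a))"
  have "e \<in> tga_carrier (subgrp J)"
    unfolding e_def using B by (intro tga_carrier_sum tga_carrier_monom) auto
  moreover have "act m e = 0"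
    unfolding e_def using B(1) sum by (simp add: act_tga_sum)
  ultimately have "e = tga_zero"
    using tf unfolding tga_torsion_free_elem_def by blast
  moreover have "e a = c a"
    using B(1) \<open>a \<in> B\<close> unfolding e_def tga_sum_def tga_monom_def by (simp add: sum.delta')
  ultimately show ?thesis
    by (simp add: tga_zero_def)
qed

lemma inj_on_monom_orbit:
  assumes tf: "tga_torsion_free_elem act (subgrp J) m"
    and "B \<subseteq> subgrp J" "\<forall>a\<in>B. l a \<noteq> 0"
  shows "inj_on (\<lambda>a. act m (tga_monom a (l a))) B"
proof (rule inj_onI, rule ccontr)
  fix a a' assume a: "a \<in> B" "a' \<in> B" "act m (tga_monom a (l a)) = act m (tga_monom a' (l a'))" "a \<noteq> a'"
  let ?c = "\<lambda>x. if x = a then l a else - l a'"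
  have "act m (tga_monom a' (- l a')) = - act m (tga_monom a' (l a'))"
    using act_monom_scale[of m a' "l a'" "-1"] by (simp add: Fvec.scale_one)
  then have "(\<Sum>x\<in>{a, a'}. act m (tga_monom x (?c x)))
      = act m (tga_monom a (l a)) - act m (tga_monom a' (l a'))"
    using a(4) by simp
  then have sum0: "(\<Sum>x\<in>{a, a'}. act m (tga_monom x (?c x))) = 0"
    using a(3) by simp
  have "?c a = 0"
    by (rule act_monom_sum_eq_zero[OF tf _ _ sum0]) (use a(1,2) assms(2) in auto)
  then show False
    using a(1) assms(3) by simp
qed

lemma independent_monom_orbit:
  assumes tf: "tga_torsion_free_elem act (subgrp J) m"
    and B: "finite B" "B \<subseteq> subgrp J" "\<forall>a\<in>B. l a \<noteq> 0"
  shows "\<not> Fvec.dependent ((\<lambda>a. act m (tga_monom a (l a))) ` B)"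
proof
  let ?f = "\<lambda>a. act m (tga_monom a (l a))"
  assume "Fvec.dependent (?f ` B)"
  then obtain u where u: "\<exists>v\<in>?f ` B. u v \<noteq> 0" "(\<Sum>v\<in>?f ` B. act v (tga_scalar \<tau> (u v))) = 0"
    using Fvec.dependent_finite[of "?f ` B"] B(1) by auto
  then obtain a0 where a0: "a0 \<in> B" "u (?f a0) \<noteq> 0"
    by blast
  have "(\<Sum>a\<in>B. act m (tga_monom a (l a * u (?f a)))) = 0"
    using u(2) by (simp add: sum.reindex[OF inj_on_monom_orbit[OF tf B(2,3)]] act_monom_scale)
  then have "l a0 * u (?f a0) = 0"
    using a0 B by (intro act_monom_sum_eq_zero[OF tf, of B]) auto
  then show False
    using a0 B(3) by simp
qed

text \<open>The growth estimate: \<open>m V\<^sup>k\<close> contains the independent elements \<open>m a\<close>, \<open>a \<in> [0,k]\<^sup>J\<close>.\<close>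
lemma Fdim_WVpow_ge:
  assumes J: "finite J" and tf: "tga_torsion_free_elem act (subgrp J) m"
  shows "(k + 1) ^ card J \<le> Fdim \<tau> act (WVpow \<tau> act {m} ((\<lambda>b. tga_monom b 1) ` box J 1) k)"
proof -
  let ?V = "(\<lambda>b. tga_monom b 1) ` box J 1"
  define gens where "gens = (\<lambda>vs. act m (tga_prod \<tau> vs)) ` {vs. set vs \<subseteq> ?V \<and> length vs = k}"
  have "\<exists>vs l. length vs = k \<and> set vs \<subseteq> ?V \<and> l \<noteq> 0 \<and> tga_prod \<tau> vs = tga_monom a l"
    if "a \<in> box J k" for a
    using tga_prod_box[OF that] by blast
  then obtain vs l where vs: "\<And>a. a \<in> box J k \<Longrightarrow>
      length (vs a) = k \<and> set (vs a) \<subseteq> ?V \<and> l a \<noteq> 0 \<and> tga_prod \<tau> (vs a) = tga_monom a (l a)"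
    by metis
  let ?f = "\<lambda>a. act m (tga_monom a (l a))"
  have box: "box J k \<subseteq> subgrp J" "finite (box J k)" "\<forall>a\<in>box J k. l a \<noteq> 0"
    using vs finite_box[OF J] by (auto simp: box_def)
  have fin: "finite gens"
    unfolding gens_def using finite_box[OF J] by (simp add: finite_lists_length_eq)
  have sub: "?f ` box J k \<subseteq> gens"
  proof
    fix x assume "x \<in> ?f ` box J k"
    then obtain a where "a \<in> box J k" "x = ?f a"
      by blast
    then show "x \<in> gens"
      using vs[of a] unfolding gens_def by (intro image_eqI[of _ _ "vs a"]) auto
  qed
  have "card (?f ` box J k) \<le> Fdim \<tau> act (Fspan \<tau> act gens)"
    by (rule Fdim_ge_card_independent[OF fin independent_monom_orbit[OF tf box(2,1,3)] sub])
  moreover have "card (?f ` box J k) = (k + 1) ^ card J"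
    using card_image[OF inj_on_monom_orbit[OF tf box(1,3)]] card_box[OF J] by simp
  moreover have "WVpow \<tau> act {m} ?V k = Fspan \<tau> act gens"
    unfolding WVpow_def gens_def by (rule arg_cong[where f = "Fspan \<tau> act"]) auto
  ultimately show ?thesis
    by simp
qed

lemma gk_ge_card_torsion_free:
  assumes "finite J" and tf: "tga_torsion_free_elem act (subgrp J) m"
  shows "ereal (real (card J)) \<le> gk \<tau> act"
proof -
  let ?V = "(\<lambda>b. tga_monom b 1) ` box J 1"
  have "ereal (real (card J)) \<le> limsup (\<lambda>k. let d = Fdim \<tau> act (WVpow \<tau> act {m} ?V k) in
      if d = 0 then - \<infinity> else ereal (ln (real d) / ln (real k)))"
    unfolding Let_def by (rule limsup_ln_ratio_ge) (rule Fdim_WVpow_ge[OF assms])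
  also have "\<dots> \<le> gk \<tau> act"
    unfolding gk_def using finite_box[OF assms(1)] by (intro SUP_upper2[of "({m}, ?V)"]) auto
  finally show ?thesis .
qed

end

subsection \<open>The Ore localization \<open>(F * A)\<S>\<^sup>-\<^sup>1\<close> and the division ring \<open>D\<close>\<close>

locale tga_ore_localization = twisted_group_algebra \<tau>
  for \<tau> :: "('i \<Rightarrow> int) \<Rightarrow> ('i \<Rightarrow> int) \<Rightarrow> 'f::field" +
  fixes I :: "'i set" and \<phi> :: "(('i \<Rightarrow> int) \<Rightarrow> 'f) \<Rightarrow> 'q::ring_1"
  assumes quotient: "right_quotient_ring \<tau> (tga_nonzero (subgrp I)) \<phi>"
begin

abbreviation S :: "(('i \<Rightarrow> int) \<Rightarrow> 'f) set" where
  "S \<equiv> tga_nonzero (subgrp I)"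

abbreviation D :: "'q set" where
  "D \<equiv> quot_div (subgrp I) \<phi>"

lemma phi_add: "p \<in> tga_carrier UNIV \<Longrightarrow> q \<in> tga_carrier UNIV \<Longrightarrow> \<phi> (tga_add p q) = \<phi> p + \<phi> q"
  using quotient by (simp add: right_quotient_ring_def)

lemma phi_mult: "p \<in> tga_carrier UNIV \<Longrightarrow> q \<in> tga_carrier UNIV \<Longrightarrow> \<phi> (tga_mult \<tau> p q) = \<phi> p * \<phi> q"
  using quotient by (simp add: right_quotient_ring_def)

lemma phi_one: "\<phi> (tga_one \<tau>) = 1"
  using quotient by (simp add: right_quotient_ring_def)

lemma phi_inj: "p \<in> tga_carrier UNIV \<Longrightarrow> q \<in> tga_carrier UNIV \<Longrightarrow> \<phi> p = \<phi> q \<Longrightarrow> p = q"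
  using quotient by (simp add: right_quotient_ring_def inj_on_def)

lemma phi_fraction: "\<exists>a\<in>tga_carrier UNIV. \<exists>s\<in>S. \<exists>t. \<phi> s * t = 1 \<and> x = \<phi> a * t"
  using quotient by (simp add: right_quotient_ring_def)

lemma phi_zero [simp]: "\<phi> tga_zero = 0"
proof -
  have "tga_add tga_zero tga_zero = (tga_zero :: ('i \<Rightarrow> int) \<Rightarrow> 'f)"
    by (simp add: tga_add_def tga_zero_def)
  then show ?thesis
    using phi_add[of tga_zero tga_zero] by simp
qed

lemma phi_tga_sum:
  "finite K \<Longrightarrow> (\<And>k. k \<in> K \<Longrightarrow> f k \<in> tga_carrier UNIV) \<Longrightarrow> \<phi> (tga_sum K f) = (\<Sum>k\<in>K. \<phi> (f k))"
  by (induction K rule: finite_induct) (auto simp: tga_sum_insert phi_add tga_carrier_sum)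

lemma S_carrier: "s \<in> S \<Longrightarrow> s \<in> tga_carrier (subgrp I)"
  by (simp add: tga_nonzero_def)

lemma S_carrier_UNIV: "s \<in> S \<Longrightarrow> s \<in> tga_carrier UNIV"
  using S_carrier tga_carrier_UNIV by blast

lemma S_left_inverse: "s \<in> S \<Longrightarrow> \<phi> s * t = 1 \<Longrightarrow> t * \<phi> s = 1"
  using quotient right_inverse_imp_left_inverse unfolding right_quotient_ring_def by blast

lemma S_unit: "s \<in> S \<Longrightarrow> \<exists>t. \<phi> s * t = 1"
  using quotient by (auto simp: right_quotient_ring_def)

lemma S_cancel_left: "s \<in> S \<Longrightarrow> \<phi> s * x = \<phi> s * y \<Longrightarrow> x = y"
  by (metis S_left_inverse S_unit mult.assoc mult_1_left)

lemma one_in_S: "tga_one \<tau> \<in> S"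
  using tga_one_neq_zero by (simp add: tga_nonzero_def tga_one_eq_monom tga_carrier_monom)

lemma phi_mult_inverse:
  assumes "s \<in> S" "s' \<in> S" "\<phi> s * t = 1" "\<phi> s' * t' = 1"
  shows "\<phi> (tga_mult \<tau> s s') * (t' * t) = 1"
  using assms by (simp add: phi_mult S_carrier_UNIV) (metis mult.assoc mult_1_left)

lemma mult_in_S:
  assumes "s \<in> S" "s' \<in> S"
  shows "tga_mult \<tau> s s' \<in> S"
proof -
  obtain t t' where "\<phi> s * t = 1" "\<phi> s' * t' = 1"
    using assms S_unit by blast
  then have "\<phi> (tga_mult \<tau> s s') \<noteq> 0"
    using assms phi_mult_inverse by fastforce
  then show ?thesis
    using assms by (auto simp: tga_nonzero_def S_carrier tga_carrier_mult)
qed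

lemma ore_condition:
  assumes s: "s \<in> S" and t: "\<phi> s * t = 1" and IK: "I \<subseteq> K" and a: "a \<in> tga_carrier (subgrp K)"
  obtains a' s' t' where "a' \<in> tga_carrier (subgrp K)" "s' \<in> S" "\<phi> s' * t' = 1" "t * \<phi> a = \<phi> a' * t'"
proof -
  obtain a' s' t' where a': "a' \<in> tga_carrier UNIV" and s': "s' \<in> S" and t': "\<phi> s' * t' = 1"
    and eq: "t * \<phi> a = \<phi> a' * t'"
    using phi_fraction[of "t * \<phi> a"] by blast
  have sU: "s \<in> tga_carrier UNIV" "s' \<in> tga_carrier UNIV"
    using s s' by (simp_all add: S_carrier_UNIV)
  have sK: "s \<in> tga_carrier (subgrp K)" "s' \<in> tga_carrier (subgrp K)"
    using s s' tga_carrier_mono[OF S_carrier subgrp_mono[OF IK]] by blast+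
  have "\<phi> (tga_mult \<tau> a s') = \<phi> s * (t * \<phi> a) * \<phi> s'"
    using t by (simp add: phi_mult[OF tga_carrier_UNIV[OF a] sU(2)] mult.assoc[symmetric])
  also have "\<dots> = \<phi> s * \<phi> a' * (t' * \<phi> s')"
    by (simp only: eq mult.assoc)
  also have "\<dots> = \<phi> (tga_mult \<tau> s a')"
    by (simp add: S_left_inverse[OF s' t'] phi_mult[OF sU(1) a'])
  finally have "tga_mult \<tau> a s' = tga_mult \<tau> s a'"
    by (rule phi_inj[OF tga_carrier_UNIV[OF tga_carrier_mult[OF a sK(2), where \<tau> = \<tau>]]
          tga_carrier_mult_UNIV[OF sU(1) a']])
  txt \<open>Left multiplication by \<open>s\<close> commutes with restriction to \<open>\<langle>x\<^sub>k : k \<in> K\<rangle>\<close> and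
    \<open>\<phi> s\<close> is invertible, so \<open>a s' = s a'\<close> forces \<open>a'\<close> into \<open>F * \<langle>x\<^sub>k : k \<in> K\<rangle>\<close>.\<close>
  then have "tga_mult \<tau> s a' = tga_restrict (subgrp K) (tga_mult \<tau> s a')"
    using tga_restrict_id[OF tga_carrier_mult[OF a sK(2), where \<tau> = \<tau>]] by simp
  also have "\<dots> = tga_mult \<tau> s (tga_restrict (subgrp K) a')"
    by (rule tga_restrict_mult_left[OF sK(1)])
  finally have "\<phi> s * \<phi> a' = \<phi> s * \<phi> (tga_restrict (subgrp K) a')"
    by (simp add: phi_mult[OF sU(1) a', symmetric]
        phi_mult[OF sU(1) tga_carrier_UNIV[OF tga_restrict_carrier[OF a']], symmetric])
  then have "\<phi> (tga_restrict (subgrp K) a') = \<phi> a'"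
    by (rule S_cancel_left[OF s, symmetric])
  then have "tga_restrict (subgrp K) a' = a'"
    by (rule phi_inj[OF tga_carrier_UNIV[OF tga_restrict_carrier[OF a']] a'])
  then have "a' \<in> tga_carrier (subgrp K)"
    using tga_restrict_carrier[OF a', of "subgrp K"] by simp
  then show ?thesis
    using that s' t' eq by blast
qed

lemma quot_divE:
  assumes "x \<in> D"
  obtains b s t where "b \<in> tga_carrier (subgrp I)" "s \<in> S" "\<phi> s * t = 1" "x = \<phi> b * t"
  using assms by (auto simp: quot_div_def)

lemma quot_div_intro: "b \<in> tga_carrier (subgrp I) \<Longrightarrow> s \<in> S \<Longrightarrow> \<phi> s * t = 1 \<Longrightarrow> \<phi> b * t \<in> D"
  by (auto simp: quot_div_def)

lemma phi_in_quot_div: "b \<in> tga_carrier (subgrp I) \<Longrightarrow> \<phi> b \<in> D"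
  using quot_div_intro[of b "tga_one \<tau>" 1] one_in_S by (simp add: phi_one)

lemma inverse_in_quot_div: "s \<in> S \<Longrightarrow> \<phi> s * t = 1 \<Longrightarrow> t \<in> D"
  using quot_div_intro[of "tga_one \<tau>" s t] one_in_S by (simp add: phi_one S_carrier)

lemma one_in_quot_div: "1 \<in> D"
  using phi_in_quot_div[OF S_carrier[OF one_in_S]] by (simp add: phi_one)

lemma zero_in_quot_div: "0 \<in> D"
  using phi_in_quot_div[of tga_zero] by simp

lemma quot_div_mult_phi:
  assumes "d \<in> D" "I \<subseteq> K" "b \<in> tga_carrier (subgrp K)"
  obtains a s t where "a \<in> tga_carrier (subgrp K)" "s \<in> S" "\<phi> s * t = 1" "d * \<phi> b = \<phi> a * t"
proof -
  obtain b1 s1 t1 where 1: "b1 \<in> tga_carrier (subgrp I)" "s1 \<in> S" "\<phi> s1 * t1 = 1" "d = \<phi> b1 * t1"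
    using assms(1) by (rule quot_divE)
  obtain a s t where o: "a \<in> tga_carrier (subgrp K)" "s \<in> S" "\<phi> s * t = 1" "t1 * \<phi> b = \<phi> a * t"
    using ore_condition[OF 1(2,3) assms(2,3)] .
  have b1K: "b1 \<in> tga_carrier (subgrp K)"
    using tga_carrier_mono[OF 1(1) subgrp_mono[OF assms(2)]] .
  have "d * \<phi> b = \<phi> (tga_mult \<tau> b1 a) * t"
    using 1 o by (simp add: mult.assoc phi_mult tga_carrier_UNIV)
  then show ?thesis
    using that o(2,3) tga_carrier_mult[OF b1K o(1)] by blast
qed

lemma quot_div_mult:
  assumes "x \<in> D" "y \<in> D"
  shows "x * y \<in> D"
proof -
  obtain b2 s2 t2 where 2: "b2 \<in> tga_carrier (subgrp I)" "s2 \<in> S" "\<phi> s2 * t2 = 1" "y = \<phi> b2 * t2"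
    using assms(2) by (rule quot_divE)
  obtain a s t where o: "a \<in> tga_carrier (subgrp I)" "s \<in> S" "\<phi> s * t = 1" "x * \<phi> b2 = \<phi> a * t"
    using quot_div_mult_phi[OF assms(1) order_refl 2(1)] .
  have "x * y = \<phi> a * (t * t2)"
    using 2(4) o(4) by (metis mult.assoc)
  then show ?thesis
    using quot_div_intro[OF o(1) mult_in_S[OF 2(2) o(2)] phi_mult_inverse[OF 2(2) o(2) 2(3) o(3)]]
    by simp
qed

lemma quot_div_add:
  assumes "x \<in> D" "y \<in> D"
  shows "x + y \<in> D"
proof -
  obtain b2 s2 t2 where 2: "b2 \<in> tga_carrier (subgrp I)" "s2 \<in> S" "\<phi> s2 * t2 = 1" "y = \<phi> b2 * t2"
    using assms(2) by (rule quot_divE)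
  obtain a s t where o: "a \<in> tga_carrier (subgrp I)" "s \<in> S" "\<phi> s * t = 1" "x * \<phi> s2 = \<phi> a * t"
    using quot_div_mult_phi[OF assms(1) order_refl S_carrier[OF 2(2)]] .
  have "x = x * \<phi> s2 * t2"
    using 2(3) by (simp add: mult.assoc)
  then have x: "x = \<phi> a * (t * t2)"
    using o(4) by (simp add: mult.assoc)
  have "y = \<phi> b2 * (\<phi> s * t) * t2"
    using 2(4) o(3) by simp
  then have y: "y = \<phi> (tga_mult \<tau> b2 s) * (t * t2)"
    using 2(1) o(2) by (simp add: mult.assoc phi_mult tga_carrier_UNIV S_carrier_UNIV)
  have b2s: "tga_mult \<tau> b2 s \<in> tga_carrier (subgrp I)"
    using 2(1) o(2) by (simp add: S_carrier tga_carrier_mult)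
  have "x + y = \<phi> (tga_add a (tga_mult \<tau> b2 s)) * (t * t2)"
    using x y o(1) b2s by (simp add: phi_add tga_carrier_UNIV distrib_right)
  then show ?thesis
    using quot_div_intro[OF tga_carrier_add[OF o(1) b2s] mult_in_S[OF 2(2) o(2)]
        phi_mult_inverse[OF 2(2) o(2) 2(3) o(3)]]
    by simp
qed

lemma quot_div_uminus:
  assumes "x \<in> D"
  shows "- x \<in> D"
proof -
  obtain b s t where 1: "b \<in> tga_carrier (subgrp I)" "s \<in> S" "\<phi> s * t = 1" "x = \<phi> b * t"
    using assms by (rule quot_divE)
  define nb where "nb = (\<lambda>c. - b c)"
  have nb: "nb \<in> tga_carrier (subgrp I)"
    using 1(1) by (simp add: nb_def tga_carrier_def)
  have "tga_add b nb = tga_zero"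
    by (simp add: nb_def tga_add_def tga_zero_def)
  then have "\<phi> nb = - \<phi> b"
    using phi_add[of b nb] 1(1) nb by (simp add: tga_carrier_UNIV add_eq_0_iff)
  then show ?thesis
    using quot_div_intro[OF nb 1(2,3)] 1(4) by simp
qed

end

subsection \<open>The localized module \<open>M\<S>\<^sup>-\<^sup>1\<close> is finite-dimensional over \<open>D\<close>\<close>

locale tga_localized_module = tga_module \<tau> act + tga_ore_localization \<tau> I \<phi>
  for \<tau> :: "('i \<Rightarrow> int) \<Rightarrow> ('i \<Rightarrow> int) \<Rightarrow> 'f::field"
    and act :: "'m::ab_group_add \<Rightarrow> (('i \<Rightarrow> int) \<Rightarrow> 'f) \<Rightarrow> 'm"
    and I :: "'i set" and \<phi> :: "(('i \<Rightarrow> int) \<Rightarrow> 'f) \<Rightarrow> 'q::ring_1" +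
  fixes actQ :: "'v::ab_group_add \<Rightarrow> 'q \<Rightarrow> 'v" and \<iota> :: "'m \<Rightarrow> 'v"
  assumes fractions: "module_of_fractions \<tau> act (tga_nonzero (subgrp I)) \<phi> actQ \<iota>"
begin

lemma actQ_add_right: "actQ v (x + y) = actQ v x + actQ v y"
  using fractions by (simp add: module_of_fractions_def)

lemma actQ_add_left: "actQ (v + w) x = actQ v x + actQ w x"
  using fractions by (simp add: module_of_fractions_def)

lemma actQ_mult: "actQ v (x * y) = actQ (actQ v x) y"
  using fractions by (simp add: module_of_fractions_def)

lemma actQ_one [simp]: "actQ v 1 = v"
  using fractions by (simp add: module_of_fractions_def)

lemma iota_add: "\<iota> (m + m') = \<iota> m + \<iota> m'"
  using fractions by (simp add: module_of_fractions_def)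

lemma iota_act: "a \<in> tga_carrier UNIV \<Longrightarrow> \<iota> (act m a) = actQ (\<iota> m) (\<phi> a)"
  using fractions by (simp add: module_of_fractions_def)

lemma iota_fraction: "\<exists>m. \<exists>s\<in>S. \<exists>t. \<phi> s * t = 1 \<and> v = actQ (\<iota> m) t"
  using fractions by (simp add: module_of_fractions_def)

lemma iota_eq_zero_iff: "\<iota> m = 0 \<longleftrightarrow> (\<exists>s\<in>S. act m s = 0)"
  using fractions by (simp add: module_of_fractions_def)

lemma actQ_zero_left [simp]: "actQ 0 x = 0"
  using actQ_add_left[of 0 0 x] by simp

lemma actQ_zero_right [simp]: "actQ v 0 = 0"
  using actQ_add_right[of v 0 0] by simp

lemma iota_zero [simp]: "\<iota> 0 = 0"
  using iota_add[of 0 0] by simp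

lemma actQ_uminus_left: "actQ (- v) x = - actQ v x"
  using actQ_add_left[of v "- v" x] by (simp add: add_eq_0_iff)

lemma actQ_uminus_right: "actQ v (- x) = - actQ v x"
  using actQ_add_right[of v x "- x"] by (simp add: add_eq_0_iff)

lemma actQ_sum_left: "actQ (\<Sum>g\<in>G. f g) x = (\<Sum>g\<in>G. actQ (f g) x)"
  by (induction G rule: infinite_finite_induct) (auto simp: actQ_add_left)

lemma actQ_sum_right: "actQ v (\<Sum>g\<in>G. f g) = (\<Sum>g\<in>G. actQ v (f g))"
  by (induction G rule: infinite_finite_induct) (auto simp: actQ_add_right)

lemma iota_sum: "\<iota> (\<Sum>g\<in>G. f g) = (\<Sum>g\<in>G. \<iota> (f g))"
  by (induction G rule: infinite_finite_induct) (auto simp: iota_add)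

definition Dspan :: "'v set \<Rightarrow> 'v set" where
  "Dspan T = {x. \<exists>c. (\<forall>u\<in>T. c u \<in> D) \<and> x = (\<Sum>u\<in>T. actQ u (c u))}"

lemma DspanI: "(\<And>u. u \<in> T \<Longrightarrow> c u \<in> D) \<Longrightarrow> (\<Sum>u\<in>T. actQ u (c u)) \<in> Dspan T"
  unfolding Dspan_def by blast

lemma Dspan_add:
  assumes "x \<in> Dspan T" "y \<in> Dspan T"
  shows "x + y \<in> Dspan T"
proof -
  obtain c where "\<And>u. u \<in> T \<Longrightarrow> c u \<in> D" "x = (\<Sum>u\<in>T. actQ u (c u))"
    using assms(1) unfolding Dspan_def by blast
  moreover obtain c' where "\<And>u. u \<in> T \<Longrightarrow> c' u \<in> D" "y = (\<Sum>u\<in>T. actQ u (c' u))"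
    using assms(2) unfolding Dspan_def by blast
  ultimately show ?thesis
    using DspanI[of T "\<lambda>u. c u + c' u"] by (simp add: actQ_add_right sum.distrib quot_div_add)
qed

lemma Dspan_zero: "0 \<in> Dspan T"
  using DspanI[of T "\<lambda>_. 0"] zero_in_quot_div by simp

lemma Dspan_sum: "(\<And>k. k \<in> K \<Longrightarrow> f k \<in> Dspan T) \<Longrightarrow> (\<Sum>k\<in>K. f k) \<in> Dspan T"
  by (induction K rule: infinite_finite_induct) (simp_all add: Dspan_zero Dspan_add)

lemma Dspan_scale:
  assumes "x \<in> Dspan T" "d \<in> D"
  shows "actQ x d \<in> Dspan T"
proof -
  obtain c where "\<And>u. u \<in> T \<Longrightarrow> c u \<in> D" "x = (\<Sum>u\<in>T. actQ u (c u))"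
    using assms(1) unfolding Dspan_def by blast
  then show ?thesis
    using DspanI[of T "\<lambda>u. c u * d"] assms(2) by (simp add: actQ_sum_left actQ_mult quot_div_mult)
qed

lemma Dspan_uminus: "x \<in> Dspan T \<Longrightarrow> - x \<in> Dspan T"
  using Dspan_scale[of x T "- 1"] quot_div_uminus[OF one_in_quot_div]
  by (simp add: actQ_uminus_right)

lemma Dspan_base: "finite T \<Longrightarrow> u \<in> T \<Longrightarrow> d \<in> D \<Longrightarrow> actQ u d \<in> Dspan T"
  using DspanI[of T "\<lambda>v. if v = u then d else 0"] zero_in_quot_div
  by (simp add: if_distrib sum.delta cong: if_cong)

lemma Dspan_mono:
  assumes "finite T'" "T \<subseteq> T'" "x \<in> Dspan T"
  shows "x \<in> Dspan T'"
proof -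
  obtain c where "\<And>u. u \<in> T \<Longrightarrow> c u \<in> D" "x = (\<Sum>u\<in>T. actQ u (c u))"
    using assms(3) unfolding Dspan_def by blast
  then show ?thesis
    using assms(1,2) by (auto intro!: Dspan_sum Dspan_base)
qed

lemma Dspan_solve:
  assumes "finite K" "h \<in> K" "\<forall>k\<in>K. \<sigma> k \<in> S" "(\<Sum>k\<in>K. actQ (w k) (\<phi> (\<sigma> k))) = 0"
    and others: "\<And>k. k \<in> K - {h} \<Longrightarrow> w k \<in> Dspan T"
  shows "w h \<in> Dspan T"
proof -
  obtain t where t: "\<phi> (\<sigma> h) * t = 1"
    using assms(2,3) S_unit by blast
  have e: "actQ (w h) (\<phi> (\<sigma> h)) = - (\<Sum>k\<in>K - {h}. actQ (w k) (\<phi> (\<sigma> k)))"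
    using assms(1,2,4) by (simp add: sum.remove eq_neg_iff_add_eq_0)
  have "w h = actQ (actQ (w h) (\<phi> (\<sigma> h))) t"
    using t by (simp add: actQ_mult[symmetric])
  also have "\<dots> = - (\<Sum>k\<in>K - {h}. actQ (actQ (w k) (\<phi> (\<sigma> k))) t)"
    by (simp add: e actQ_uminus_left actQ_sum_left)
  finally have wh: "w h = - (\<Sum>k\<in>K - {h}. actQ (actQ (w k) (\<phi> (\<sigma> k))) t)" .
  have tD: "t \<in> D"
    using inverse_in_quot_div assms(2,3) t by blast
  have "(\<Sum>k\<in>K - {h}. actQ (actQ (w k) (\<phi> (\<sigma> k))) t) \<in> Dspan T"
  proof (rule Dspan_sum)
    fix k assume k: "k \<in> K - {h}"
    then have "\<phi> (\<sigma> k) \<in> D"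
      using assms(3) by (blast intro: phi_in_quot_div S_carrier)
    then show "actQ (actQ (w k) (\<phi> (\<sigma> k))) t \<in> Dspan T"
      using Dspan_scale[OF Dspan_scale[OF others[OF k]] tD] by blast
  qed
  then show ?thesis
    unfolding wh by (rule Dspan_uminus)
qed

abbreviation X :: "'i \<Rightarrow> int \<Rightarrow> ('i \<Rightarrow> int) \<Rightarrow> 'f" where
  "X j k \<equiv> tga_monom (xpow j k) 1"

text \<open>Multiplying a relation \<open>\<Sum>\<^sub>k m x\<^sub>j\<^sup>k s\<^sub>k = 0\<close> (\<open>s\<^sub>k \<in> F * B\<close>) on the right by \<open>x\<^sub>j\<^sup>l\<close>.\<close>
lemma shifted_relation:
  assumes s: "s \<in> tga_carrier (subgrp (insert j I))" and ms: "act m s = 0"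
  obtains \<sigma> where "\<forall>k\<in>tga_degrees j s. \<sigma> k \<in> S"
    "(\<Sum>k\<in>tga_degrees j s. actQ (\<iota> (act m (X j (k + l)))) (\<phi> (\<sigma> k))) = 0"
proof -
  let ?K = "tga_degrees j s" and ?s = "tga_coeff \<tau> j s"
  have coeff: "?s k \<in> tga_carrier (subgrp I)" for k
    using tga_coeff_carrier[OF s] .
  have "\<exists>\<sigma>. \<sigma> \<in> tga_carrier (subgrp I) \<and> (\<sigma> = tga_zero \<longleftrightarrow> ?s k = tga_zero) \<and>
      act (act (act m (X j k)) (?s k)) (X j l) = act (act m (X j (k + l))) \<sigma>" for k
    using act_monom_shift[OF coeff[of k], of m "xpow j k" "xpow j l"] by (metis gadd_xpow)
  then obtain \<sigma> where \<sigma>: "\<And>k. \<sigma> k \<in> tga_carrier (subgrp I)" "\<And>k. \<sigma> k = tga_zero \<longleftrightarrow> ?s k = tga_zero"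
    "\<And>k. act (act (act m (X j k)) (?s k)) (X j l) = act (act m (X j (k + l))) (\<sigma> k)"
    by metis
  have "act m s = act m (tga_sum ?K (\<lambda>k. tga_mult \<tau> (X j k) (?s k)))"
    using tga_decompose[OF s, of j] by (rule arg_cong)
  also have "\<dots> = (\<Sum>k\<in>?K. act m (tga_mult \<tau> (X j k) (?s k)))"
    by (rule act_tga_sum[OF finite_tga_degrees[OF s] tga_carrier_mult_UNIV[OF tga_carrier_monom[OF UNIV_I] coeff]])
  also have "\<dots> = (\<Sum>k\<in>?K. act (act m (X j k)) (?s k))"
    by (simp add: act_mult tga_carrier_UNIV[OF coeff])
  finally have sum0: "(\<Sum>k\<in>?K. act (act m (X j k)) (?s k)) = 0"
    using ms by simp
  have "(\<Sum>k\<in>?K. act (act m (X j (k + l))) (\<sigma> k)) = act (\<Sum>k\<in>?K. act (act m (X j k)) (?s k)) (X j l)"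
    by (simp add: act_sum_left \<sigma>(3))
  then have shifted: "(\<Sum>k\<in>?K. act (act m (X j (k + l))) (\<sigma> k)) = 0"
    by (simp add: sum0)
  have "(\<Sum>k\<in>?K. actQ (\<iota> (act m (X j (k + l)))) (\<phi> (\<sigma> k)))
      = \<iota> (\<Sum>k\<in>?K. act (act m (X j (k + l))) (\<sigma> k))"
    by (simp add: iota_sum iota_act[OF tga_carrier_UNIV[OF \<sigma>(1)]])
  then have "(\<Sum>k\<in>?K. actQ (\<iota> (act m (X j (k + l)))) (\<phi> (\<sigma> k))) = 0"
    by (simp add: shifted)
  moreover have "\<sigma> k \<in> S" if "k \<in> ?K" for k
    using \<sigma>(1,2) tga_coeff_nonzero[OF that] by (simp add: tga_nonzero_def)
  ultimately show ?thesis
    using that by blast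
qed

lemma powers_in_finite_Dspan:
  assumes s: "s \<in> tga_carrier (subgrp (insert j I))" "s \<noteq> tga_zero" "act m s = 0"
  obtains lo hi where "\<And>N. \<iota> (act m (X j N)) \<in> Dspan ((\<lambda>i. \<iota> (act m (X j i))) ` {lo..<hi})"
proof -
  let ?K = "tga_degrees j s"
  define w where "w i = \<iota> (act m (X j i))" for i
  define lo where "lo = Min ?K"
  define hi where "hi = Max ?K"
  define W where "W = w ` {lo..<hi}"
  have K: "finite ?K" "?K \<noteq> {}"
    using finite_tga_degrees[OF s(1)] tga_degrees_nonempty[OF s(2)] .
  have lohi: "lo \<in> ?K" "hi \<in> ?K" "\<And>k. k \<in> ?K \<Longrightarrow> lo \<le> k \<and> k \<le> hi"
    unfolding lo_def hi_def using Min_in[OF K] Max_in[OF K] Min_le[OF K(1)] Max_ge[OF K(1)] by blast+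
  have solve: "w (h + l) \<in> Dspan W" if h: "h \<in> ?K" and others: "\<And>k. k \<in> ?K - {h} \<Longrightarrow> w (k + l) \<in> Dspan W"
    for h l
  proof -
    obtain \<sigma> where \<sigma>: "\<forall>k\<in>?K. \<sigma> k \<in> S" "(\<Sum>k\<in>?K. actQ (\<iota> (act m (X j (k + l)))) (\<phi> (\<sigma> k))) = 0"
      using shifted_relation[OF s(1,3), of l] by blast
    show ?thesis
      using Dspan_solve[OF K(1) h \<sigma>(1), where w = "\<lambda>k. w (k + l)"] \<sigma>(2) others by (simp add: w_def)
  qed
  have "w N \<in> Dspan W" for N
  proof (rule int_two_sided_induct[where Q = "\<lambda>N. w N \<in> Dspan W", of lo hi])
    show "lo \<le> hi"
      using lohi(1,3) by blast
  next
    fix N assume "lo \<le> N" "N < hi"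
    then show "w N \<in> Dspan W"
      using Dspan_base[of W "w N" 1] one_in_quot_div by (simp add: W_def)
  next
    fix N assume N: "hi \<le> N" and IH: "\<And>k. lo \<le> k \<Longrightarrow> k < N \<Longrightarrow> w k \<in> Dspan W"
    have "w (hi + (N - hi)) \<in> Dspan W"
    proof (rule solve[OF lohi(2)])
      fix k assume "k \<in> ?K - {hi}"
      then have "lo \<le> k" "k < hi"
        using lohi(3)[of k] by auto
      then show "w (k + (N - hi)) \<in> Dspan W"
        using N IH[of "k + (N - hi)"] by simp
    qed
    then show "w N \<in> Dspan W"
      by simp
  next
    fix N assume N: "N < lo" and IH: "\<And>k. N < k \<Longrightarrow> k < hi \<Longrightarrow> w k \<in> Dspan W"
    have "w (lo + (N - lo)) \<in> Dspan W"
    proof (rule solve[OF lohi(1)])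
      fix k assume "k \<in> ?K - {lo}"
      then have "lo < k" "k \<le> hi"
        using lohi(3)[of k] by auto
      then show "w (k + (N - lo)) \<in> Dspan W"
        using N IH[of "k + (N - lo)"] by simp
    qed
    then show "w N \<in> Dspan W"
      by simp
  qed
  then show ?thesis
    using that unfolding W_def w_def by blast
qed

definition finitely_Dspanned :: "'i set \<Rightarrow> 'm \<Rightarrow> bool" where
  "finitely_Dspanned K m \<longleftrightarrow>
     (\<exists>T. finite T \<and> (\<forall>a\<in>tga_carrier (subgrp K). actQ (\<iota> m) (\<phi> a) \<in> Dspan T))"

lemma finitely_Dspanned_base: "finitely_Dspanned I m"
  unfolding finitely_Dspanned_def
  using Dspan_base[of "{\<iota> m}" "\<iota> m"] phi_in_quot_div by blast

text \<open>The Ore condition moves \<open>D\<close>-coefficients past \<open>\<phi>(F * \<langle>x\<^sub>k : k \<in> K\<rangle>)\<close>.\<close>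
lemma Dspan_actQ_phi:
  assumes IK: "I \<subseteq> K" and x: "x \<in> Dspan W" and b: "b \<in> tga_carrier (subgrp K)"
    and gen: "\<And>u c. u \<in> W \<Longrightarrow> c \<in> tga_carrier (subgrp K) \<Longrightarrow> actQ u (\<phi> c) \<in> Dspan T"
  shows "actQ x (\<phi> b) \<in> Dspan T"
proof -
  obtain c where c: "\<forall>u\<in>W. c u \<in> D" "x = (\<Sum>u\<in>W. actQ u (c u))"
    using x unfolding Dspan_def by blast
  have "(\<Sum>u\<in>W. actQ (actQ u (c u)) (\<phi> b)) \<in> Dspan T"
  proof (rule Dspan_sum)
    fix u assume u: "u \<in> W"
    obtain a s t where a: "a \<in> tga_carrier (subgrp K)" "s \<in> S" "\<phi> s * t = 1" "c u * \<phi> b = \<phi> a * t"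
      using quot_div_mult_phi[OF c(1)[rule_format, OF u] IK b] .
    show "actQ (actQ u (c u)) (\<phi> b) \<in> Dspan T"
      using Dspan_scale[OF gen[OF u a(1)] inverse_in_quot_div[OF a(2,3)]] a(4)
      by (simp add: actQ_mult[symmetric])
  qed
  then show ?thesis
    by (simp add: c(2) actQ_sum_left)
qed

lemma finitely_Dspanned_insert:
  assumes IK: "I \<subseteq> K" and jK: "j \<notin> K" and IH: "\<And>m'. finitely_Dspanned K m'"
    and tors: "\<exists>s\<in>tga_carrier (subgrp (insert j I)). s \<noteq> tga_zero \<and> act m s = 0"
  shows "finitely_Dspanned (insert j K) m"
proof -
  obtain s where s: "s \<in> tga_carrier (subgrp (insert j I))" "s \<noteq> tga_zero" "act m s = 0"
    using tors by blast
  obtain lo hi where win: "\<And>N. \<iota> (act m (X j N)) \<in> Dspan ((\<lambda>i. \<iota> (act m (X j i))) ` {lo..<hi})"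
    using powers_in_finite_Dspan[OF s] by blast
  have "\<forall>m'. \<exists>T. finite T \<and> (\<forall>a\<in>tga_carrier (subgrp K). actQ (\<iota> m') (\<phi> a) \<in> Dspan T)"
    using IH unfolding finitely_Dspanned_def by blast
  then obtain Tf where Tf: "\<And>m'. finite (Tf m')"
    "\<And>m' a. a \<in> tga_carrier (subgrp K) \<Longrightarrow> actQ (\<iota> m') (\<phi> a) \<in> Dspan (Tf m')"
    by metis
  define T where "T = (\<Union>i\<in>{lo..<hi}. Tf (act m (X j i)))"
  have fT: "finite T"
    using Tf(1) by (simp add: T_def)
  have gen: "actQ u (\<phi> c) \<in> Dspan T"
    if u: "u \<in> (\<lambda>i. \<iota> (act m (X j i))) ` {lo..<hi}" and c: "c \<in> tga_carrier (subgrp K)" for u c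
  proof -
    obtain i where i: "i \<in> {lo..<hi}" "u = \<iota> (act m (X j i))"
      using u by blast
    then have "Tf (act m (X j i)) \<subseteq> T"
      by (auto simp: T_def)
    then show ?thesis
      using Dspan_mono[OF fT _ Tf(2)[OF c]] i(2) by blast
  qed
  have "actQ (\<iota> m) (\<phi> a) \<in> Dspan T" if a: "a \<in> tga_carrier (subgrp (insert j K))" for a
  proof -
    let ?a = "tga_coeff \<tau> j a"
    have coeff: "?a k \<in> tga_carrier (subgrp K)" for k
      using tga_coeff_carrier[OF a] .
    have "\<phi> a = \<phi> (tga_sum (tga_degrees j a) (\<lambda>k. tga_mult \<tau> (X j k) (?a k)))"
      using tga_decompose[OF a, of j] by (rule arg_cong)
    also have "\<dots> = (\<Sum>k\<in>tga_degrees j a. \<phi> (tga_mult \<tau> (X j k) (?a k)))"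
      by (rule phi_tga_sum[OF finite_tga_degrees[OF a] tga_carrier_mult_UNIV[OF tga_carrier_monom[OF UNIV_I] coeff]])
    also have "\<dots> = (\<Sum>k\<in>tga_degrees j a. \<phi> (X j k) * \<phi> (?a k))"
      by (simp add: phi_mult tga_carrier_UNIV[OF coeff])
    finally have "actQ (\<iota> m) (\<phi> a) = (\<Sum>k\<in>tga_degrees j a. actQ (\<iota> (act m (X j k))) (\<phi> (?a k)))"
      by (simp add: actQ_sum_right actQ_mult iota_act)
    also have "\<dots> \<in> Dspan T"
      by (intro Dspan_sum Dspan_actQ_phi[OF IK win coeff gen])
    finally show ?thesis .
  qed
  then show ?thesis
    unfolding finitely_Dspanned_def using fT by blast
qed

lemma finitely_Dspanned_UNIV:
  assumes "finite (UNIV :: 'i set)"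
    and tors: "\<And>j m. j \<notin> I \<Longrightarrow> \<exists>s\<in>tga_carrier (subgrp (insert j I)). s \<noteq> tga_zero \<and> act m s = 0"
  shows "finitely_Dspanned UNIV m"
proof -
  have "finitely_Dspanned (I \<union> J) m'" if "finite J" "J \<inter> I = {}" for J m'
    using that
  proof (induction J arbitrary: m' rule: finite_induct)
    case empty
    then show ?case
      using finitely_Dspanned_base by simp
  next
    case (insert j J)
    then have j: "j \<notin> I \<union> J" and IH: "\<And>m'. finitely_Dspanned (I \<union> J) m'"
      by auto
    have "finitely_Dspanned (insert j (I \<union> J)) m'" for m'
      using finitely_Dspanned_insert[OF _ j IH tors[of j m']] j by blast
    then show ?case
      by simp
  qed
  moreover have "finite (UNIV - I)" "(UNIV - I) \<inter> I = {}"
    using assms(1) by auto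
  ultimately have "finitely_Dspanned (I \<union> (UNIV - I)) m"
    by blast
  then show ?thesis
    by simp
qed

lemma finite_Dspan_UNIV:
  assumes "finite (UNIV :: 'i set)" "fin_gen_module act"
    and tors: "\<And>j m. j \<notin> I \<Longrightarrow> \<exists>s\<in>tga_carrier (subgrp (insert j I)). s \<noteq> tga_zero \<and> act m s = 0"
  obtains T where "finite T" "\<And>v. v \<in> Dspan T"
proof -
  obtain Tf where Tf: "\<And>m. finite (Tf m)"
    "\<And>m a. a \<in> tga_carrier UNIV \<Longrightarrow> actQ (\<iota> m) (\<phi> a) \<in> Dspan (Tf m)"
    using finitely_Dspanned_UNIV[OF assms(1) tors] unfolding finitely_Dspanned_def subgrp_UNIV by metis
  obtain G where G: "finite G" "\<And>m. \<exists>c. (\<forall>g\<in>G. c g \<in> tga_carrier UNIV) \<and> m = (\<Sum>g\<in>G. act g (c g))"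
    using assms(2) unfolding fin_gen_module_def by blast
  define T where "T = (\<Union>g\<in>G. Tf g)"
  have fT: "finite T"
    using G(1) Tf(1) by (simp add: T_def)
  have "v \<in> Dspan T" for v
  proof -
    obtain m s t where v: "s \<in> S" "\<phi> s * t = 1" "v = actQ (\<iota> m) t"
      using iota_fraction by blast
    obtain c where c: "\<forall>g\<in>G. c g \<in> tga_carrier UNIV" "m = (\<Sum>g\<in>G. act g (c g))"
      using G(2) by blast
    have "\<iota> m = (\<Sum>g\<in>G. actQ (\<iota> g) (\<phi> (c g)))"
      using c by (simp add: iota_sum iota_act)
    also have "\<dots> \<in> Dspan T"
    proof (rule Dspan_sum)
      fix g assume "g \<in> G"
      then show "actQ (\<iota> g) (\<phi> (c g)) \<in> Dspan T"
        using Dspan_mono[OF fT _ Tf(2)[of "c g" g]] c(1) by (auto simp: T_def)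
    qed
    finally show ?thesis
      using Dspan_scale inverse_in_quot_div[OF v(1,2)] v(3) by blast
  qed
  then show ?thesis
    using that fT by blast
qed

end

theorem lemma3p3:
  fixes \<tau> :: "('i::finite \<Rightarrow> int) \<Rightarrow> ('i \<Rightarrow> int) \<Rightarrow> 'f::field"
    and act :: "'m::ab_group_add \<Rightarrow> (('i \<Rightarrow> int) \<Rightarrow> 'f) \<Rightarrow> 'm"
    and r :: nat and I :: "'i set"
    and \<phi> :: "(('i \<Rightarrow> int) \<Rightarrow> 'f) \<Rightarrow> 'q::ring_1"
    and actQ :: "'v::ab_group_add \<Rightarrow> 'q \<Rightarrow> 'v"
    and \<iota> :: "'m \<Rightarrow> 'v"
  assumes "two_cocycle \<tau>"
    and "right_tga_module \<tau> act"
    and "fin_gen_module act"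
    and "gk \<tau> act = ereal (real r)"
    and "0 < r" and "r < card (UNIV :: 'i set)"
    and "card I = r"
    and "\<not> tga_torsion act (subgrp I)"
    and "right_quotient_ring \<tau> (tga_nonzero (subgrp I)) \<phi>"
    and "module_of_fractions \<tau> act (tga_nonzero (subgrp I)) \<phi> actQ \<iota>"
  shows "(\<exists>v::'v. v \<noteq> 0) \<and>
         (\<exists>T. finite T \<and> (\<forall>v. \<exists>c. (\<forall>u\<in>T. c u \<in> quot_div (subgrp I) \<phi>) \<and>
                                      v = (\<Sum>u\<in>T. actQ u (c u))))"
proof -
  interpret tga_localized_module \<tau> act I \<phi> actQ \<iota>
    using assms(1,2,9,10) by unfold_locales
  obtain m0 where "tga_torsion_free_elem act (subgrp I) m0"
    using assms(8) unfolding tga_torsion_def tga_torsion_free_elem_def by blast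
  then have "\<iota> m0 \<noteq> 0"
    by (auto simp: iota_eq_zero_iff tga_nonzero_def tga_torsion_free_elem_def)
  moreover have "\<exists>s\<in>tga_carrier (subgrp (insert j I)). s \<noteq> tga_zero \<and> act m s = 0"
    if "j \<notin> I" for j m
  proof (rule ccontr)
    assume "\<not> ?thesis"
    then have "ereal (real (card (insert j I))) \<le> gk \<tau> act"
      by (intro gk_ge_card_torsion_free) (auto simp: tga_torsion_free_elem_def)
    then show False
      using that assms(4,7) by simp
  qed
  then obtain T where "finite T" "\<And>v. v \<in> Dspan T"
    using finite_Dspan_UNIV[OF finite_UNIV assms(3)] by blast
  then have "finite T \<and> (\<forall>v. \<exists>c. (\<forall>u\<in>T. c u \<in> quot_div (subgrp I) \<phi>) \<and> v = (\<Sum>u\<in>T. actQ u (c u)))"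
    unfolding Dspan_def by blast
  ultimately show ?thesis
    by blast
qed

end
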